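(* For any small cartesian closed category $\mathbf{C}$, there exist a set $S$ and an $S$-sorted CCC $\mathbf{CFam}_S\to\tilde{\mathbf{C}}$ such that $\mathbf{C}$ is equivalent to $\tilde{\mathbf{C}}$.
   Context: $\mathsf{BiMag}_S$ is the set of formal expressions generated inductively by: each $X\in S$, the symbol $1$, and $X\times Y$, $Y^X$ for $X,Y\in\mathsf{BiMag}_S$. $\mathbf{CFam}_S$ is the free cartesian closed category with object set $\mathsf{BiMag}_S$ and no generating morphisms. An $S$-sorted CCC is a CCC $\tilde{\mathbf{C}}$ with $\mathrm{Ob}(\tilde{\mathbf{C}})=\mathsf{BiMag}_S$ together with a cartesian closed functor $\iota:\mathbf{CFam}_S\to\tilde{\mathbf{C}}$ that is the identity on objects. *)

theory Defs
  imports Main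
begin

record ('o, 'm) cat =
  Obj :: "'o set"
  Arr :: "'m set"
  Dom :: "'m \<Rightarrow> 'o"
  Cod :: "'m \<Rightarrow> 'o"
  Idt :: "'o \<Rightarrow> 'm"
  Cmp :: "'m \<Rightarrow> 'm \<Rightarrow> 'm"   (* Cmp C g f = g \<circ> f *)

definition hom :: "('o, 'm) cat \<Rightarrow> 'o \<Rightarrow> 'o \<Rightarrow> 'm set" where
  "hom C a b = {f \<in> Arr C. Dom C f = a \<and> Cod C f = b}"

definition category :: "('o, 'm) cat \<Rightarrow> bool" where
  "category C \<longleftrightarrow>
     (\<forall>f \<in> Arr C. Dom C f \<in> Obj C \<and> Cod C f \<in> Obj C) \<and>
     (\<forall>a \<in> Obj C. Idt C a \<in> hom C a a) \<and>
     (\<forall>f g. f \<in> Arr C \<and> g \<in> Arr C \<and> Cod C f = Dom C g \<longrightarrow>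
        Cmp C g f \<in> hom C (Dom C f) (Cod C g)) \<and>
     (\<forall>f \<in> Arr C. Cmp C (Idt C (Cod C f)) f = f \<and> Cmp C f (Idt C (Dom C f)) = f) \<and>
     (\<forall>f g h. f \<in> Arr C \<and> g \<in> Arr C \<and> h \<in> Arr C \<and> Cod C f = Dom C g \<and> Cod C g = Dom C h
        \<longrightarrow> Cmp C h (Cmp C g f) = Cmp C (Cmp C h g) f)"

definition is_terminal :: "('o, 'm) cat \<Rightarrow> 'o \<Rightarrow> bool" where
  "is_terminal C t \<longleftrightarrow> t \<in> Obj C \<and> (\<forall>a \<in> Obj C. \<exists>!f. f \<in> hom C a t)"

definition is_product :: "('o, 'm) cat \<Rightarrow> 'o \<Rightarrow> 'o \<Rightarrow> 'o \<Rightarrow> 'm \<Rightarrow> 'm \<Rightarrow> bool" where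
  "is_product C a b p p1 p2 \<longleftrightarrow>
     p \<in> Obj C \<and> p1 \<in> hom C p a \<and> p2 \<in> hom C p b \<and>
     (\<forall>c \<in> Obj C. \<forall>f \<in> hom C c a. \<forall>g \<in> hom C c b.
        \<exists>!h. h \<in> hom C c p \<and> Cmp C p1 h = f \<and> Cmp C p2 h = g)"

definition is_exponential ::
  "('o, 'm) cat \<Rightarrow> 'o \<Rightarrow> 'o \<Rightarrow> 'o \<Rightarrow> 'o \<Rightarrow> 'm \<Rightarrow> 'm \<Rightarrow> 'm \<Rightarrow> bool" where
  "is_exponential C x y e p p1 p2 ev \<longleftrightarrow>
     is_product C e x p p1 p2 \<and> ev \<in> hom C p y \<and>
     (\<forall>c q q1 q2 f. is_product C c x q q1 q2 \<and> f \<in> hom C q y \<longrightarrow>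
        (\<exists>!g. g \<in> hom C c e \<and>
           (\<forall>h. h \<in> hom C q p \<and> Cmp C p1 h = Cmp C g q1 \<and> Cmp C p2 h = q2
                \<longrightarrow> Cmp C ev h = f)))"

definition cartesian_closed :: "('o, 'm) cat \<Rightarrow> bool" where
  "cartesian_closed C \<longleftrightarrow> category C \<and>
     (\<exists>t. is_terminal C t) \<and>
     (\<forall>a \<in> Obj C. \<forall>b \<in> Obj C. \<exists>p p1 p2. is_product C a b p p1 p2) \<and>
     (\<forall>x \<in> Obj C. \<forall>y \<in> Obj C. \<exists>e p p1 p2 ev. is_exponential C x y e p p1 p2 ev)"

definition "functor" ::
  "('o1, 'm1) cat \<Rightarrow> ('o2, 'm2) cat \<Rightarrow> ('o1 \<Rightarrow> 'o2) \<Rightarrow> ('m1 \<Rightarrow> 'm2) \<Rightarrow> bool" where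
  "functor C D Fo Fm \<longleftrightarrow> category C \<and> category D \<and>
     (\<forall>a \<in> Obj C. Fo a \<in> Obj D) \<and>
     (\<forall>f \<in> Arr C. Fm f \<in> hom D (Fo (Dom C f)) (Fo (Cod C f))) \<and>
     (\<forall>a \<in> Obj C. Fm (Idt C a) = Idt D (Fo a)) \<and>
     (\<forall>f g. f \<in> Arr C \<and> g \<in> Arr C \<and> Cod C f = Dom C g \<longrightarrow>
        Fm (Cmp C g f) = Cmp D (Fm g) (Fm f))"

text \<open>Cartesian closed functor: preserves terminal objects, binary products and
  exponentials (up to the canonical comparison isomorphisms, i.e. maps such
  diagrams to such diagrams).\<close>
definition cc_functor ::
  "('o1, 'm1) cat \<Rightarrow> ('o2, 'm2) cat \<Rightarrow> ('o1 \<Rightarrow> 'o2) \<Rightarrow> ('m1 \<Rightarrow> 'm2) \<Rightarrow> bool" where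
  "cc_functor C D Fo Fm \<longleftrightarrow> functor C D Fo Fm \<and>
     (\<forall>t. is_terminal C t \<longrightarrow> is_terminal D (Fo t)) \<and>
     (\<forall>a b p p1 p2. is_product C a b p p1 p2 \<longrightarrow>
        is_product D (Fo a) (Fo b) (Fo p) (Fm p1) (Fm p2)) \<and>
     (\<forall>x y e p p1 p2 ev. is_exponential C x y e p p1 p2 ev \<longrightarrow>
        is_exponential D (Fo x) (Fo y) (Fo e) (Fo p) (Fm p1) (Fm p2) (Fm ev))"

definition is_iso :: "('o, 'm) cat \<Rightarrow> 'm \<Rightarrow> bool" where
  "is_iso C f \<longleftrightarrow> f \<in> Arr C \<and>
     (\<exists>g \<in> hom C (Cod C f) (Dom C f).
        Cmp C g f = Idt C (Dom C f) \<and> Cmp C f g = Idt C (Cod C f))"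

definition nat_iso ::
  "('o1, 'm1) cat \<Rightarrow> ('o2, 'm2) cat \<Rightarrow> ('o1 \<Rightarrow> 'o2) \<Rightarrow> ('m1 \<Rightarrow> 'm2) \<Rightarrow>
   ('o1 \<Rightarrow> 'o2) \<Rightarrow> ('m1 \<Rightarrow> 'm2) \<Rightarrow> ('o1 \<Rightarrow> 'm2) \<Rightarrow> bool" where
  "nat_iso C D Fo Fm Go Gm \<tau> \<longleftrightarrow>
     (\<forall>a \<in> Obj C. \<tau> a \<in> hom D (Fo a) (Go a) \<and> is_iso D (\<tau> a)) \<and>
     (\<forall>f \<in> Arr C. Cmp D (Gm f) (\<tau> (Dom C f)) = Cmp D (\<tau> (Cod C f)) (Fm f))"

definition equivalent_cats :: "('o1, 'm1) cat \<Rightarrow> ('o2, 'm2) cat \<Rightarrow> bool" where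
  "equivalent_cats C D \<longleftrightarrow>
     (\<exists>Fo Fm Go Gm \<eta> \<epsilon>. functor C D Fo Fm \<and> functor D C Go Gm \<and>
        nat_iso C C id id (Go \<circ> Fo) (Gm \<circ> Fm) \<eta> \<and>
        nat_iso D D (Fo \<circ> Go) (Fm \<circ> Gm) id id \<epsilon>)"

text \<open>Exp X Y stands for the exponential Y^X.\<close>
datatype 'a bimag = Base 'a | One | Prod "'a bimag" "'a bimag" | Exp "'a bimag" "'a bimag"

definition BiMag :: "'a set \<Rightarrow> 'a bimag set" where
  "BiMag S = {X. set_bimag X \<subseteq> S}"

text \<open>Raw arrow terms of the free CCC (categorical combinators).\<close>
datatype 'a tm =
    TId "'a bimag" | TComp "'a tm" "'a tm" | TBang "'a bimag"
  | TFst "'a bimag" "'a bimag" | TSnd "'a bimag" "'a bimag" | TPair "'a tm" "'a tm"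
  | TEv "'a bimag" "'a bimag" | TLam "'a tm"

inductive typed :: "'a set \<Rightarrow> 'a tm \<Rightarrow> 'a bimag \<Rightarrow> 'a bimag \<Rightarrow> bool" for S where
  t_id: "A \<in> BiMag S \<Longrightarrow> typed S (TId A) A A"
| t_comp: "typed S f A B \<Longrightarrow> typed S g B C \<Longrightarrow> typed S (TComp g f) A C"
| t_bang: "A \<in> BiMag S \<Longrightarrow> typed S (TBang A) A One"
| t_fst: "A \<in> BiMag S \<Longrightarrow> B \<in> BiMag S \<Longrightarrow> typed S (TFst A B) (Prod A B) A"
| t_snd: "A \<in> BiMag S \<Longrightarrow> B \<in> BiMag S \<Longrightarrow> typed S (TSnd A B) (Prod A B) B"
| t_pair: "typed S f C A \<Longrightarrow> typed S g C B \<Longrightarrow> typed S (TPair f g) C (Prod A B)"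
| t_ev: "X \<in> BiMag S \<Longrightarrow> Y \<in> BiMag S \<Longrightarrow> typed S (TEv X Y) (Prod (Exp X Y) X) Y"
| t_lam: "typed S f (Prod C X) Y \<Longrightarrow> typed S (TLam f) C (Exp X Y)"

inductive teq :: "'a set \<Rightarrow> 'a tm \<Rightarrow> 'a tm \<Rightarrow> bool" for S where
  e_refl: "typed S f A B \<Longrightarrow> teq S f f"
| e_sym: "teq S f g \<Longrightarrow> teq S g f"
| e_trans: "teq S f g \<Longrightarrow> teq S g h \<Longrightarrow> teq S f h"
| e_comp: "teq S f f' \<Longrightarrow> teq S g g' \<Longrightarrow> typed S f A B \<Longrightarrow> typed S g B C \<Longrightarrow>
           teq S (TComp g f) (TComp g' f')"
| e_pair: "teq S f f' \<Longrightarrow> teq S g g' \<Longrightarrow> typed S f C A \<Longrightarrow> typed S g C B \<Longrightarrow>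
           teq S (TPair f g) (TPair f' g')"
| e_lam: "teq S f f' \<Longrightarrow> typed S f (Prod C X) Y \<Longrightarrow> teq S (TLam f) (TLam f')"
| e_idl: "typed S f A B \<Longrightarrow> teq S (TComp (TId B) f) f"
| e_idr: "typed S f A B \<Longrightarrow> teq S (TComp f (TId A)) f"
| e_assoc: "typed S f A B \<Longrightarrow> typed S g B C \<Longrightarrow> typed S h C D \<Longrightarrow>
           teq S (TComp h (TComp g f)) (TComp (TComp h g) f)"
| e_bang: "typed S f A One \<Longrightarrow> teq S f (TBang A)"
| e_fst: "typed S f C A \<Longrightarrow> typed S g C B \<Longrightarrow> teq S (TComp (TFst A B) (TPair f g)) f"
| e_snd: "typed S f C A \<Longrightarrow> typed S g C B \<Longrightarrow> teq S (TComp (TSnd A B) (TPair f g)) g"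
| e_pair_eta: "typed S h C (Prod A B) \<Longrightarrow>
           teq S (TPair (TComp (TFst A B) h) (TComp (TSnd A B) h)) h"
| e_beta: "typed S f (Prod C X) Y \<Longrightarrow>
           teq S (TComp (TEv X Y) (TPair (TComp (TLam f) (TFst C X)) (TSnd C X))) f"
| e_eta: "typed S g C (Exp X Y) \<Longrightarrow>
           teq S (TLam (TComp (TEv X Y) (TPair (TComp g (TFst C X)) (TSnd C X)))) g"

definition CFam :: "'a set \<Rightarrow> ('a bimag, 'a bimag \<times> 'a bimag \<times> 'a tm set) cat" where
  "CFam S = \<lparr> Obj = BiMag S,
     Arr = {(A, B, {u. teq S t u}) | A B t. typed S t A B},
     Dom = fst,
     Cod = (\<lambda>f. fst (snd f)),
     Idt = (\<lambda>A. (A, A, {u. teq S (TId A) u})),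
     Cmp = (\<lambda>g f. (fst f, fst (snd g),
              {u. teq S (TComp (SOME t. t \<in> snd (snd g)) (SOME t. t \<in> snd (snd f))) u})) \<rparr>"

definition sorted_ccc ::
  "'a set \<Rightarrow> ('a bimag, 'm) cat \<Rightarrow> ('a bimag \<times> 'a bimag \<times> 'a tm set \<Rightarrow> 'm) \<Rightarrow> bool" where
  "sorted_ccc S Ct \<iota> \<longleftrightarrow> cartesian_closed Ct \<and> Obj Ct = BiMag S \<and>
     cc_functor (CFam S) Ct (\<lambda>A. A) \<iota>"

end

theory Submission
  imports Defs
begin

text \<open>Take \<open>S\<close> to be the set of objects of \<open>C\<close>, and interpret each formal expression \<open>A\<close> as an
  object \<open>\<lbrakk>A\<rbrakk>\<close> of \<open>C\<close> using a chosen terminal object, chosen products and chosen exponentials.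
  Let \<open>C\<^sup>~\<close> have the expressions as objects and the arrows \<open>\<lbrakk>A\<rbrakk> \<rightarrow> \<lbrakk>B\<rbrakk>\<close> of \<open>C\<close> as arrows
  \<open>A \<rightarrow> B\<close>. Since \<open>\<lbrakk>Base c\<rbrakk> = c\<close>, the interpretation is onto the objects, so \<open>C\<^sup>~\<close> is
  equivalent to \<open>C\<close> and cartesian closed. Interpreting the combinator terms gives \<open>\<iota>\<close>, which is
  well defined because the equations of cartesian closed categories are sound in \<open>C\<close>. It sends
  the canonical terminal object, products and exponentials of \<open>CFam\<^sub>S\<close> to those of \<open>C\<^sup>~\<close>, hence
  all of them, as any two are isomorphic.\<close>

lemma hom_iff: "f \<in> hom C a b \<longleftrightarrow> f \<in> Arr C \<and> Dom C f = a \<and> Cod C f = b"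
  by (simp add: hom_def)

lemma arr_in_hom: "f \<in> Arr C \<Longrightarrow> f \<in> hom C (Dom C f) (Cod C f)"
  by (simp add: hom_def)

lemma categoryI:
  assumes "\<And>f. f \<in> Arr C \<Longrightarrow> Dom C f \<in> Obj C \<and> Cod C f \<in> Obj C"
    and "\<And>a. a \<in> Obj C \<Longrightarrow> Idt C a \<in> hom C a a"
    and "\<And>f g a b c. f \<in> hom C a b \<Longrightarrow> g \<in> hom C b c \<Longrightarrow> Cmp C g f \<in> hom C a c"
    and "\<And>f a b. f \<in> hom C a b \<Longrightarrow> Cmp C (Idt C b) f = f \<and> Cmp C f (Idt C a) = f"
    and "\<And>f g h a b c d. f \<in> hom C a b \<Longrightarrow> g \<in> hom C b c \<Longrightarrow> h \<in> hom C c d \<Longrightarrow>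
           Cmp C h (Cmp C g f) = Cmp C (Cmp C h g) f"
  shows "category C"
  unfolding category_def using assms by (simp add: hom_def)

locale cat =
  fixes C :: "('o, 'm) cat"
  assumes category: "category C"
begin

lemma hom_objs: "f \<in> hom C a b \<Longrightarrow> a \<in> Obj C \<and> b \<in> Obj C"
  using category unfolding category_def hom_def by auto

lemma comp_in_hom: "f \<in> hom C a b \<Longrightarrow> g \<in> hom C b c \<Longrightarrow> Cmp C g f \<in> hom C a c"
  using category unfolding category_def hom_def by auto

lemma id_in_hom: "a \<in> Obj C \<Longrightarrow> Idt C a \<in> hom C a a"
  using category unfolding category_def by auto

lemma comp_id_left: "f \<in> hom C a b \<Longrightarrow> Cmp C (Idt C b) f = f"
  using category unfolding category_def hom_def by auto

lemma comp_id_right: "f \<in> hom C a b \<Longrightarrow> Cmp C f (Idt C a) = f"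
  using category unfolding category_def hom_def by auto

lemma comp_assoc:
  "f \<in> hom C a b \<Longrightarrow> g \<in> hom C b c \<Longrightarrow> h \<in> hom C c d \<Longrightarrow>
   Cmp C h (Cmp C g f) = Cmp C (Cmp C h g) f"
  using category unfolding category_def hom_def by auto

lemma isoI:
  "f \<in> hom C a b \<Longrightarrow> g \<in> hom C b a \<Longrightarrow> Cmp C g f = Idt C a \<Longrightarrow> Cmp C f g = Idt C b \<Longrightarrow>
   is_iso C f"
  unfolding is_iso_def hom_def by auto

lemma isoE:
  assumes "is_iso C f" "f \<in> hom C a b"
  obtains g where "g \<in> hom C b a" "Cmp C g f = Idt C a" "Cmp C f g = Idt C b"
  using assms unfolding is_iso_def hom_def by auto

lemma id_iso: "a \<in> Obj C \<Longrightarrow> is_iso C (Idt C a)"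
  using isoI id_in_hom comp_id_left by metis

lemma iso_cancel_left:
  assumes i: "i \<in> hom C b c" "is_iso C i" and h: "h \<in> hom C a b" "h' \<in> hom C a b"
    and eq: "Cmp C i h = Cmp C i h'"
  shows "h = h'"
proof -
  obtain j where j: "j \<in> hom C c b" "Cmp C j i = Idt C b" using isoE[OF i(2,1)] by blast
  have "h = Cmp C (Cmp C j i) h" using j comp_id_left h by simp
  also have "\<dots> = Cmp C (Cmp C j i) h'"
    using eq comp_assoc[OF h(1) i(1) j(1)] comp_assoc[OF h(2) i(1) j(1)] by simp
  also have "\<dots> = h'" using j comp_id_left h by simp
  finally show ?thesis .
qed

lemma iso_cancel_right:
  assumes j: "j \<in> hom C a b" "is_iso C j" and h: "h \<in> hom C b c" "h' \<in> hom C b c"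
    and eq: "Cmp C h j = Cmp C h' j"
  shows "h = h'"
proof -
  obtain k where k: "k \<in> hom C b a" "Cmp C j k = Idt C b" using isoE[OF j(2,1)] by blast
  have "h = Cmp C h (Cmp C j k)" using k comp_id_right h by simp
  also have "\<dots> = Cmp C h' (Cmp C j k)"
    using eq comp_assoc[OF k(1) j(1) h(1)] comp_assoc[OF k(1) j(1) h(2)] by simp
  also have "\<dots> = h'" using k comp_id_right h by simp
  finally show ?thesis .
qed

end

section \<open>Terminal objects, products and exponentials\<close>

lemma is_productI:
  assumes "p \<in> Obj C" "p1 \<in> hom C p a" "p2 \<in> hom C p b"
    and "\<And>c f g. f \<in> hom C c a \<Longrightarrow> g \<in> hom C c b \<Longrightarrow>
           \<exists>h \<in> hom C c p. Cmp C p1 h = f \<and> Cmp C p2 h = g"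
    and "\<And>c h h'. h \<in> hom C c p \<Longrightarrow> h' \<in> hom C c p \<Longrightarrow> Cmp C p1 h = Cmp C p1 h' \<Longrightarrow>
           Cmp C p2 h = Cmp C p2 h' \<Longrightarrow> h = h'"
  shows "is_product C a b p p1 p2"
  unfolding is_product_def using assms by metis

lemma is_productD:
  "is_product C a b p p1 p2 \<Longrightarrow> p \<in> Obj C \<and> p1 \<in> hom C p a \<and> p2 \<in> hom C p b"
  unfolding is_product_def by blast

lemma is_exponentialD:
  "is_exponential C x y e p p1 p2 ev \<Longrightarrow> is_product C e x p p1 p2 \<and> ev \<in> hom C p y"
  unfolding is_exponential_def by blast

text \<open>The arrow \<open>g \<times> id\<^sub>x : q \<rightarrow> p\<close> for products \<open>q\<close> of \<open>c, x\<close> and \<open>p\<close> of \<open>e, x\<close>: it is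
  the unique arrow \<open>h\<close> quantified over in \<^const>\<open>is_exponential\<close>.\<close>

definition times_id :: "('o, 'm) cat \<Rightarrow> 'o \<Rightarrow> 'm \<Rightarrow> 'm \<Rightarrow> 'o \<Rightarrow> 'm \<Rightarrow> 'm \<Rightarrow> 'm \<Rightarrow> 'm" where
  "times_id C p p1 p2 q q1 q2 g =
     (THE h. h \<in> hom C q p \<and> Cmp C p1 h = Cmp C g q1 \<and> Cmp C p2 h = q2)"

context cat
begin

lemma product_pairing_ex:
  "is_product C a b p p1 p2 \<Longrightarrow> f \<in> hom C c a \<Longrightarrow> g \<in> hom C c b \<Longrightarrow>
   \<exists>h \<in> hom C c p. Cmp C p1 h = f \<and> Cmp C p2 h = g"
  unfolding is_product_def using hom_objs by metis

lemma product_arr_eqI: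
  assumes P: "is_product C a b p p1 p2" and h: "h \<in> hom C c p" "h' \<in> hom C c p"
    and eq: "Cmp C p1 h = Cmp C p1 h'" "Cmp C p2 h = Cmp C p2 h'"
  shows "h = h'"
proof -
  have "c \<in> Obj C" using h hom_objs by blast
  moreover have "Cmp C p1 h \<in> hom C c a" "Cmp C p2 h \<in> hom C c b"
    using comp_in_hom[OF h(1)] is_productD[OF P] by auto
  ultimately show ?thesis using P h eq unfolding is_product_def by metis
qed

lemma product_iso:
  assumes P: "is_product C a b p p1 p2" and Q: "is_product C a b q q1 q2"
  shows "\<exists>i \<in> hom C q p. is_iso C i \<and> Cmp C p1 i = q1 \<and> Cmp C p2 i = q2"
proof -
  have p: "p \<in> Obj C" "p1 \<in> hom C p a" "p2 \<in> hom C p b" and q: "q \<in> Obj C" "q1 \<in> hom C q a"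
    "q2 \<in> hom C q b"
    using is_productD[OF P] is_productD[OF Q] by auto
  obtain i where i: "i \<in> hom C q p" "Cmp C p1 i = q1" "Cmp C p2 i = q2"
    using product_pairing_ex[OF P q(2,3)] by blast
  obtain j where j: "j \<in> hom C p q" "Cmp C q1 j = p1" "Cmp C q2 j = p2"
    using product_pairing_ex[OF Q p(2,3)] by blast
  have "Cmp C i j = Idt C p"
    by (rule product_arr_eqI[OF P comp_in_hom[OF j(1) i(1)] id_in_hom[OF p(1)]])
      (use comp_assoc[OF j(1) i(1)] i j comp_id_right p in auto)
  moreover have "Cmp C j i = Idt C q"
    by (rule product_arr_eqI[OF Q comp_in_hom[OF i(1) j(1)] id_in_hom[OF q(1)]])
      (use comp_assoc[OF i(1) j(1)] i j comp_id_right q in auto)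
  ultimately show ?thesis using i j isoI by blast
qed

lemma product_transfer_iso:
  assumes P: "is_product C a b p p1 p2" and i: "i \<in> hom C q p" "is_iso C i"
  shows "is_product C a b q (Cmp C p1 i) (Cmp C p2 i)"
proof -
  obtain j where j: "j \<in> hom C p q" "Cmp C i j = Idt C p" using isoE[OF i(2,1)] by blast
  have p: "p1 \<in> hom C p a" "p2 \<in> hom C p b" using is_productD[OF P] by auto
  show ?thesis
  proof (rule is_productI)
    show "q \<in> Obj C" using i hom_objs by blast
    show "Cmp C p1 i \<in> hom C q a" "Cmp C p2 i \<in> hom C q b" using comp_in_hom[OF i(1)] p by auto
  next
    fix c f g assume "f \<in> hom C c a" "g \<in> hom C c b"
    then obtain h where h: "h \<in> hom C c p" "Cmp C p1 h = f" "Cmp C p2 h = g"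
      using product_pairing_ex[OF P] by blast
    have jh: "Cmp C j h \<in> hom C c q" using comp_in_hom[OF h(1) j(1)] .
    have ijh: "Cmp C i (Cmp C j h) = h"
      using comp_assoc[OF h(1) j(1) i(1)] j comp_id_left[OF h(1)] by simp
    have "Cmp C (Cmp C p1 i) (Cmp C j h) = f" "Cmp C (Cmp C p2 i) (Cmp C j h) = g"
      using comp_assoc[OF jh i(1) p(1)] comp_assoc[OF jh i(1) p(2)] ijh h by simp_all
    then show "\<exists>h' \<in> hom C c q. Cmp C (Cmp C p1 i) h' = f \<and> Cmp C (Cmp C p2 i) h' = g"
      using jh by blast
  next
    fix c h h' assume h: "h \<in> hom C c q" "h' \<in> hom C c q"
      and eq: "Cmp C (Cmp C p1 i) h = Cmp C (Cmp C p1 i) h'"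
        "Cmp C (Cmp C p2 i) h = Cmp C (Cmp C p2 i) h'"
    have "Cmp C i h = Cmp C i h'"
      by (rule product_arr_eqI[OF P comp_in_hom[OF h(1) i(1)] comp_in_hom[OF h(2) i(1)]])
        (use eq comp_assoc[OF h(1) i(1)] comp_assoc[OF h(2) i(1)] p in auto)
    then show "h = h'" using iso_cancel_left i h by blast
  qed
qed

lemma terminal_arr_unique:
  assumes "is_terminal C t" "f \<in> hom C a t" "g \<in> hom C a t"
  shows "f = g"
proof -
  have "\<exists>!f. f \<in> hom C a t" using assms hom_objs unfolding is_terminal_def by blast
  then show ?thesis using assms(2,3) by blast
qed

lemma terminal_iso:
  assumes T: "is_terminal C t" and T': "is_terminal C t'"
  shows "\<exists>i \<in> hom C t' t. is_iso C i"
proof -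
  have o: "t \<in> Obj C" "t' \<in> Obj C" using T T' unfolding is_terminal_def by blast+
  obtain i j where i: "i \<in> hom C t' t" and j: "j \<in> hom C t t'"
    using T T' o unfolding is_terminal_def by blast
  have "Cmp C j i = Idt C t'"
    by (rule terminal_arr_unique[OF T' comp_in_hom[OF i j] id_in_hom[OF o(2)]])
  moreover have "Cmp C i j = Idt C t"
    by (rule terminal_arr_unique[OF T comp_in_hom[OF j i] id_in_hom[OF o(1)]])
  ultimately show ?thesis using i j isoI by blast
qed

lemma terminal_transfer_iso:
  assumes T: "is_terminal C t" and i: "i \<in> hom C t' t" "is_iso C i"
  shows "is_terminal C t'"
proof -
  obtain j where j: "j \<in> hom C t t'" using isoE[OF i(2,1)] by blast
  have "\<exists>!f. f \<in> hom C a t'" if a: "a \<in> Obj C" for a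
  proof -
    obtain k where k: "k \<in> hom C a t" using T a unfolding is_terminal_def by blast
    have "f = Cmp C j k" if f: "f \<in> hom C a t'" for f
    proof -
      have "Cmp C i f = Cmp C i (Cmp C j k)"
        by (rule terminal_arr_unique[OF T comp_in_hom[OF f i(1)] comp_in_hom[OF comp_in_hom[OF k
          j] i(1)]])
      then show ?thesis using iso_cancel_left[OF i f comp_in_hom[OF k j]] by blast
    qed
    then show ?thesis using comp_in_hom[OF k j] by blast
  qed
  moreover have "t' \<in> Obj C" using i hom_objs by blast
  ultimately show ?thesis unfolding is_terminal_def by blast
qed

lemma times_id:
  assumes P: "is_product C e x p p1 p2" and Q: "is_product C c x q q1 q2" and g: "g \<in> hom C c e"
  shows "times_id C p p1 p2 q q1 q2 g \<in> hom C q p"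
    and "Cmp C p1 (times_id C p p1 p2 q q1 q2 g) = Cmp C g q1"
    and "Cmp C p2 (times_id C p p1 p2 q q1 q2 g) = q2"
proof -
  have "Cmp C g q1 \<in> hom C q e" "q2 \<in> hom C q x" using comp_in_hom[OF _ g] is_productD[OF Q] by auto
  then obtain h where h: "h \<in> hom C q p" "Cmp C p1 h = Cmp C g q1" "Cmp C p2 h = q2"
    using product_pairing_ex[OF P] by blast
  have "\<exists>!h. h \<in> hom C q p \<and> Cmp C p1 h = Cmp C g q1 \<and> Cmp C p2 h = q2"
  proof (rule ex1I[of _ h])
    fix h' assume "h' \<in> hom C q p \<and> Cmp C p1 h' = Cmp C g q1 \<and> Cmp C p2 h' = q2"
    then show "h' = h" using product_arr_eqI[OF P _ h(1)] h by metis
  qed (use h in simp)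
  from theI'[OF this] show "times_id C p p1 p2 q q1 q2 g \<in> hom C q p"
    and "Cmp C p1 (times_id C p p1 p2 q q1 q2 g) = Cmp C g q1"
    and "Cmp C p2 (times_id C p p1 p2 q q1 q2 g) = q2"
    unfolding times_id_def by simp_all
qed

lemma times_id_unique:
  assumes P: "is_product C e x p p1 p2" and Q: "is_product C c x q q1 q2" and g: "g \<in> hom C c e"
    and h: "h \<in> hom C q p" "Cmp C p1 h = Cmp C g q1" "Cmp C p2 h = q2"
  shows "h = times_id C p p1 p2 q q1 q2 g"
  by (rule product_arr_eqI[OF P h(1) times_id(1)[OF P Q g]]) (simp_all add: h times_id[OF P Q g])

lemma times_id_comp:
  assumes P: "is_product C e x p p1 p2" and Q: "is_product C d x q q1 q2"
    and R: "is_product C c x r r1 r2" and g: "g \<in> hom C d e" and k: "k \<in> hom C c d"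
  shows "Cmp C (times_id C p p1 p2 q q1 q2 g) (times_id C q q1 q2 r r1 r2 k) =
         times_id C p p1 p2 r r1 r2 (Cmp C g k)"
proof (rule times_id_unique[OF P R comp_in_hom[OF k g]])
  let ?G = "times_id C p p1 p2 q q1 q2 g" and ?K = "times_id C q q1 q2 r r1 r2 k"
  note G = times_id[OF P Q g] and K = times_id[OF Q R k]
  have pr: "p1 \<in> hom C p e" "p2 \<in> hom C p x" "q1 \<in> hom C q d" "r1 \<in> hom C r c"
    using is_productD[OF P] is_productD[OF Q] is_productD[OF R] by auto
  show "Cmp C ?G ?K \<in> hom C r p" using comp_in_hom[OF K(1) G(1)] .
  have "Cmp C p1 (Cmp C ?G ?K) = Cmp C (Cmp C g q1) ?K"
    using comp_assoc[OF K(1) G(1) pr(1)] G by simp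
  also have "\<dots> = Cmp C g (Cmp C k r1)" using comp_assoc[OF K(1) pr(3) g] K by simp
  finally show "Cmp C p1 (Cmp C ?G ?K) = Cmp C (Cmp C g k) r1"
    using comp_assoc[OF pr(4) k g] by simp
  show "Cmp C p2 (Cmp C ?G ?K) = r2" using comp_assoc[OF K(1) G(1) pr(2)] G K by simp
qed

lemma times_id_id:
  assumes P: "is_product C e x p p1 p2"
  shows "times_id C p p1 p2 p p1 p2 (Idt C e) = Idt C p"
proof -
  have p: "p \<in> Obj C" "p1 \<in> hom C p e" "p2 \<in> hom C p x" using is_productD[OF P] by auto
  then have "e \<in> Obj C" using hom_objs by blast
  with p show ?thesis
    using times_id_unique[OF P P id_in_hom[of e] id_in_hom[OF p(1)]]
    by (simp add: comp_id_left comp_id_right)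
qed

lemma exponential_obj:
  assumes "is_exponential C x y e p p1 p2 ev"
  shows "e \<in> Obj C"
proof -
  have "p1 \<in> hom C p e" using is_productD[OF is_exponentialD[OF assms, THEN conjunct1]] by blast
  then show ?thesis using hom_objs by blast
qed

lemma exponential_transpose_ex:
  assumes E: "is_exponential C x y e p p1 p2 ev" and Q: "is_product C c x q q1 q2"
    and f: "f \<in> hom C q y"
  shows "\<exists>g \<in> hom C c e. Cmp C ev (times_id C p p1 p2 q q1 q2 g) = f"
proof -
  obtain g where "g \<in> hom C c e"
    "\<forall>h. h \<in> hom C q p \<and> Cmp C p1 h = Cmp C g q1 \<and> Cmp C p2 h = q2 \<longrightarrow> Cmp C ev h = f"
    using E Q f unfolding is_exponential_def by blast
  then show ?thesis using times_id[OF is_exponentialD[OF E, THEN conjunct1] Q] by blast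
qed

lemma exponential_transpose_unique:
  assumes E: "is_exponential C x y e p p1 p2 ev" and Q: "is_product C c x q q1 q2"
    and g: "g \<in> hom C c e" "g' \<in> hom C c e"
    and eq: "Cmp C ev (times_id C p p1 p2 q q1 q2 g) = Cmp C ev (times_id C p p1 p2 q q1 q2 g')"
  shows "g = g'"
proof -
  have P: "is_product C e x p p1 p2" and ev: "ev \<in> hom C p y" using is_exponentialD[OF E] by auto
  let ?f = "Cmp C ev (times_id C p p1 p2 q q1 q2 g)"
  have "?f \<in> hom C q y" using comp_in_hom[OF times_id(1)[OF P Q g(1)] ev] .
  then have "\<exists>!k. k \<in> hom C c e \<and>
      (\<forall>h. h \<in> hom C q p \<and> Cmp C p1 h = Cmp C k q1 \<and> Cmp C p2 h = q2 \<longrightarrow> Cmp C ev h = ?f)"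
    using E Q unfolding is_exponential_def by blast
  moreover have "\<forall>h. h \<in> hom C q p \<and> Cmp C p1 h = Cmp C g q1 \<and> Cmp C p2 h = q2 \<longrightarrow> Cmp C ev h = ?f"
    using times_id_unique[OF P Q g(1)] by auto
  moreover have "\<forall>h. h \<in> hom C q p \<and> Cmp C p1 h = Cmp C g' q1 \<and> Cmp C p2 h = q2 \<longrightarrow> Cmp C ev h = ?f"
    using times_id_unique[OF P Q g(2)] eq by auto
  ultimately show ?thesis using g by blast
qed

lemma is_exponentialI:
  assumes P: "is_product C e x p p1 p2" and ev: "ev \<in> hom C p y"
    and ex: "\<And>c q q1 q2 f. is_product C c x q q1 q2 \<Longrightarrow> f \<in> hom C q y \<Longrightarrow>
              \<exists>g \<in> hom C c e. Cmp C ev (times_id C p p1 p2 q q1 q2 g) = f"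
    and un: "\<And>c q q1 q2 g g'. is_product C c x q q1 q2 \<Longrightarrow> g \<in> hom C c e \<Longrightarrow> g' \<in> hom C c e \<Longrightarrow>
              Cmp C ev (times_id C p p1 p2 q q1 q2 g) = Cmp C ev (times_id C p p1 p2 q q1 q2 g') \<Longrightarrow>
              g = g'"
  shows "is_exponential C x y e p p1 p2 ev"
  unfolding is_exponential_def
proof (intro conjI P ev allI impI)
  fix c q q1 q2 f assume "is_product C c x q q1 q2 \<and> f \<in> hom C q y"
  then have Q: "is_product C c x q q1 q2" and f: "f \<in> hom C q y" by auto
  have iff: "(\<forall>h. h \<in> hom C q p \<and> Cmp C p1 h = Cmp C g q1 \<and> Cmp C p2 h = q2 \<longrightarrow> Cmp C ev h = f)
      \<longleftrightarrow> Cmp C ev (times_id C p p1 p2 q q1 q2 g) = f" if g: "g \<in> hom C c e" for g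
  proof
    assume "\<forall>h. h \<in> hom C q p \<and> Cmp C p1 h = Cmp C g q1 \<and> Cmp C p2 h = q2 \<longrightarrow> Cmp C ev h = f"
    then show "Cmp C ev (times_id C p p1 p2 q q1 q2 g) = f" using times_id[OF P Q g] by blast
  qed (use times_id_unique[OF P Q g] in auto)
  obtain g where g: "g \<in> hom C c e" "Cmp C ev (times_id C p p1 p2 q q1 q2 g) = f"
    using ex[OF Q f] by blast
  show "\<exists>!g. g \<in> hom C c e \<and>
      (\<forall>h. h \<in> hom C q p \<and> Cmp C p1 h = Cmp C g q1 \<and> Cmp C p2 h = q2 \<longrightarrow> Cmp C ev h = f)"
  proof (rule ex1I[of _ g])
    fix g' assume "g' \<in> hom C c e \<and>
      (\<forall>h. h \<in> hom C q p \<and> Cmp C p1 h = Cmp C g' q1 \<and> Cmp C p2 h = q2 \<longrightarrow> Cmp C ev h = f)"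
    then show "g' = g" using iff un[OF Q _ g(1)] g(2) by blast
  qed (use g iff in blast)
qed

lemma ev_times_id_comp:
  assumes P: "is_product C e x p p1 p2" and Q: "is_product C d x q q1 q2"
    and R: "is_product C c x r r1 r2" and g: "g \<in> hom C d e" and k: "k \<in> hom C c d"
    and ev: "ev \<in> hom C p y"
  shows "Cmp C (Cmp C ev (times_id C p p1 p2 q q1 q2 g)) (times_id C q q1 q2 r r1 r2 k) =
         Cmp C ev (times_id C p p1 p2 r r1 r2 (Cmp C g k))"
  unfolding comp_assoc[OF times_id(1)[OF Q R k] times_id(1)[OF P Q g] ev, symmetric]
  using times_id_comp[OF P Q R g k] by (rule arg_cong)

lemma times_id_Idt_iso:
  assumes Q: "is_product C c x q q1 q2" and R: "is_product C c x r r1 r2"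
  shows "is_iso C (times_id C r r1 r2 q q1 q2 (Idt C c))"
proof -
  have c: "c \<in> Obj C" using is_productD[OF Q] hom_objs by blast
  have "Cmp C (Idt C c) (Idt C c) = Idt C c" using comp_id_left id_in_hom c by blast
  then show ?thesis
    using isoI[OF times_id(1)[OF R Q id_in_hom[OF c]] times_id(1)[OF Q R id_in_hom[OF c]]]
      times_id_comp[OF Q R Q id_in_hom[OF c] id_in_hom[OF c]]
      times_id_comp[OF R Q R id_in_hom[OF c] id_in_hom[OF c]] times_id_id[OF Q] times_id_id[OF R]
    by simp
qed

lemma exponential_property_change_product:
  assumes P: "is_product C e x p p1 p2" and ev: "ev \<in> hom C p y"
    and R: "is_product C c x r r1 r2" and Q: "is_product C c x q q1 q2"
    and ex: "\<forall>f \<in> hom C r y. \<exists>g \<in> hom C c e. Cmp C ev (times_id C p p1 p2 r r1 r2 g) = f"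
    and un: "\<forall>g \<in> hom C c e. \<forall>g' \<in> hom C c e. Cmp C ev (times_id C p p1 p2 r r1 r2 g) =
       Cmp C ev (times_id C p p1 p2 r r1 r2 g') \<longrightarrow> g = g'"
  shows "(\<forall>f \<in> hom C q y. \<exists>g \<in> hom C c e. Cmp C ev (times_id C p p1 p2 q q1 q2 g) = f) \<and>
    (\<forall>g \<in> hom C c e. \<forall>g' \<in> hom C c e. Cmp C ev (times_id C p p1 p2 q q1 q2 g) =
       Cmp C ev (times_id C p p1 p2 q q1 q2 g') \<longrightarrow> g = g')"
proof -
  have c: "c \<in> Obj C" using is_productD[OF Q] hom_objs by blast
  let ?j = "times_id C r r1 r2 q q1 q2 (Idt C c)"
  have j: "?j \<in> hom C q r" "is_iso C ?j"
    using times_id(1)[OF R Q id_in_hom[OF c]] times_id_Idt_iso[OF Q R] by auto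
  have via_r: "Cmp C ev (times_id C p p1 p2 q q1 q2 g) =
      Cmp C (Cmp C ev (times_id C p p1 p2 r r1 r2 g)) ?j" if g: "g \<in> hom C c e" for g
    using ev_times_id_comp[OF P R Q g id_in_hom[OF c] ev] comp_id_right[OF g] by simp
  have evr: "Cmp C ev (times_id C p p1 p2 r r1 r2 g) \<in> hom C r y" if "g \<in> hom C c e" for g
    using comp_in_hom[OF times_id(1)[OF P R that] ev] .
  show ?thesis
  proof (intro conjI ballI impI)
    fix f assume f: "f \<in> hom C q y"
    obtain k where k: "k \<in> hom C r q" "Cmp C k ?j = Idt C q" using isoE[OF j(2,1)] by blast
    obtain g where g: "g \<in> hom C c e" "Cmp C ev (times_id C p p1 p2 r r1 r2 g) = Cmp C f k"
      using ex comp_in_hom[OF k(1) f] by blast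
    have "Cmp C ev (times_id C p p1 p2 q q1 q2 g) = f"
      using via_r[OF g(1)] g(2) comp_assoc[OF j(1) k(1) f] k(2) comp_id_right[OF f] by simp
    then show "\<exists>g \<in> hom C c e. Cmp C ev (times_id C p p1 p2 q q1 q2 g) = f" using g(1) by blast
  next
    fix g g' assume g: "g \<in> hom C c e" "g' \<in> hom C c e"
      and "Cmp C ev (times_id C p p1 p2 q q1 q2 g) = Cmp C ev (times_id C p p1 p2 q q1 q2 g')"
    then have "Cmp C ev (times_id C p p1 p2 r r1 r2 g) = Cmp C ev (times_id C p p1 p2 r r1 r2 g')"
      using iso_cancel_right[OF j evr evr] via_r by simp
    then show "g = g'" using un g by blast
  qed
qed

lemma is_exponentialI_chosen_products:
  assumes P: "is_product C e x p p1 p2" and ev: "ev \<in> hom C p y"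
    and chosen: "\<And>c. c \<in> Obj C \<Longrightarrow> \<exists>r r1 r2. is_product C c x r r1 r2 \<and>
       (\<forall>f \<in> hom C r y. \<exists>g \<in> hom C c e. Cmp C ev (times_id C p p1 p2 r r1 r2 g) = f) \<and>
       (\<forall>g \<in> hom C c e. \<forall>g' \<in> hom C c e. Cmp C ev (times_id C p p1 p2 r r1 r2 g) =
           Cmp C ev (times_id C p p1 p2 r r1 r2 g') \<longrightarrow> g = g')"
  shows "is_exponential C x y e p p1 p2 ev"
proof -
  have "(\<forall>f \<in> hom C q y. \<exists>g \<in> hom C c e. Cmp C ev (times_id C p p1 p2 q q1 q2 g) = f) \<and>
    (\<forall>g \<in> hom C c e. \<forall>g' \<in> hom C c e. Cmp C ev (times_id C p p1 p2 q q1 q2 g) =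
       Cmp C ev (times_id C p p1 p2 q q1 q2 g') \<longrightarrow> g = g')"
    if Q: "is_product C c x q q1 q2" for c q q1 q2
  proof -
    have "c \<in> Obj C" using is_productD[OF Q] hom_objs by blast
    then show ?thesis using chosen exponential_property_change_product[OF P ev _ Q] by blast
  qed
  then show ?thesis using is_exponentialI[OF P ev] by blast
qed

lemma exponential_iso:
  assumes E: "is_exponential C x y e p p1 p2 ev" and E': "is_exponential C x y e' p' p1' p2' ev'"
  shows "\<exists>i \<in> hom C e' e. is_iso C i \<and> Cmp C ev (times_id C p p1 p2 p' p1' p2' i) = ev'"
proof -
  have P: "is_product C e x p p1 p2" "ev \<in> hom C p y" using is_exponentialD[OF E] by auto
  have P': "is_product C e' x p' p1' p2'" "ev' \<in> hom C p' y" using is_exponentialD[OF E'] by auto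
  obtain i where i: "i \<in> hom C e' e" "Cmp C ev (times_id C p p1 p2 p' p1' p2' i) = ev'"
    using exponential_transpose_ex[OF E P'] by blast
  obtain j where j: "j \<in> hom C e e'" "Cmp C ev' (times_id C p' p1' p2' p p1 p2 j) = ev"
    using exponential_transpose_ex[OF E' P] by blast
  have o: "e \<in> Obj C" "e' \<in> Obj C" using i hom_objs by blast+
  have "Cmp C ev (times_id C p p1 p2 p p1 p2 (Cmp C i j)) =
      Cmp C ev (times_id C p p1 p2 p p1 p2 (Idt C e))"
    using ev_times_id_comp[OF P(1) P'(1) P(1) i(1) j(1) P(2)] i(2) j(2) times_id_id[OF P(1)]
      comp_id_right[OF P(2)] by simp
  then have "Cmp C i j = Idt C e"
    using exponential_transpose_unique[OF E P(1) comp_in_hom[OF j(1) i(1)] id_in_hom[OF o(1)]]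
    by blast
  moreover
  have "Cmp C ev' (times_id C p' p1' p2' p' p1' p2' (Cmp C j i)) =
      Cmp C ev' (times_id C p' p1' p2' p' p1' p2' (Idt C e'))"
    using ev_times_id_comp[OF P'(1) P(1) P'(1) j(1) i(1) P'(2)] i(2) j(2) times_id_id[OF P'(1)]
      comp_id_right[OF P'(2)] by simp
  then have "Cmp C j i = Idt C e'"
    using exponential_transpose_unique[OF E' P'(1) comp_in_hom[OF i(1) j(1)] id_in_hom[OF o(2)]]
    by blast
  ultimately show ?thesis using i j isoI by blast
qed

lemma exponential_transfer_iso:
  assumes E: "is_exponential C x y e p p1 p2 ev" and i: "i \<in> hom C e' e" "is_iso C i"
    and P': "is_product C e' x p' p1' p2'"
  shows "is_exponential C x y e' p' p1' p2' (Cmp C ev (times_id C p p1 p2 p' p1' p2' i))"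
proof -
  have P: "is_product C e x p p1 p2" and ev: "ev \<in> hom C p y" using is_exponentialD[OF E] by auto
  obtain j where j: "j \<in> hom C e e'" "Cmp C i j = Idt C e" using isoE[OF i(2,1)] by blast
  let ?ev' = "Cmp C ev (times_id C p p1 p2 p' p1' p2' i)"
  have via_e: "Cmp C ?ev' (times_id C p' p1' p2' q q1 q2 g) =
      Cmp C ev (times_id C p p1 p2 q q1 q2 (Cmp C i g))"
    if "is_product C c x q q1 q2" "g \<in> hom C c e'" for c q q1 q2 g
    using ev_times_id_comp[OF P P' that(1) i(1) that(2) ev] .
  show ?thesis
  proof (rule is_exponentialI[OF P' comp_in_hom[OF times_id(1)[OF P P' i(1)] ev]])
    fix c q q1 q2 f assume Q: "is_product C c x q q1 q2" and "f \<in> hom C q y"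
    then obtain g where g: "g \<in> hom C c e" "Cmp C ev (times_id C p p1 p2 q q1 q2 g) = f"
      using exponential_transpose_ex[OF E] by blast
    have "Cmp C i (Cmp C j g) = g"
      using comp_assoc[OF g(1) j(1) i(1)] j(2) comp_id_left[OF g(1)] by simp
    then show "\<exists>g \<in> hom C c e'. Cmp C ?ev' (times_id C p' p1' p2' q q1 q2 g) = f"
      using via_e[OF Q comp_in_hom[OF g(1) j(1)]] comp_in_hom[OF g(1) j(1)] g(2) by auto
  next
    fix c q q1 q2 g g'
    assume Q: "is_product C c x q q1 q2" and g: "g \<in> hom C c e'" "g' \<in> hom C c e'"
      and "Cmp C ?ev' (times_id C p' p1' p2' q q1 q2 g) =
          Cmp C ?ev' (times_id C p' p1' p2' q q1 q2 g')"
    then have "Cmp C i g = Cmp C i g'"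
      using exponential_transpose_unique[OF E Q comp_in_hom[OF g(1) i(1)] comp_in_hom[OF g(2) i(1)]]
        via_e[OF Q] by simp
    then show "g = g'" using iso_cancel_left[OF i g] by blast
  qed
qed

end

section \<open>Functors and universal constructions\<close>

lemma functorI:
  assumes "category C" "category D" "\<And>a. a \<in> Obj C \<Longrightarrow> Fo a \<in> Obj D"
    and hom: "\<And>f a b. f \<in> hom C a b \<Longrightarrow> Fm f \<in> hom D (Fo a) (Fo b)"
    and "\<And>a. a \<in> Obj C \<Longrightarrow> Fm (Idt C a) = Idt D (Fo a)"
    and comp: "\<And>f g a b c. f \<in> hom C a b \<Longrightarrow> g \<in> hom C b c \<Longrightarrow>
                 Fm (Cmp C g f) = Cmp D (Fm g) (Fm f)"
  shows "functor C D Fo Fm"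
  unfolding functor_def
proof (intro conjI ballI allI impI)
  fix f assume "f \<in> Arr C"
  then show "Fm f \<in> hom D (Fo (Dom C f)) (Fo (Cod C f))" by (intro hom) (simp add: hom_def)
next
  fix f g assume "f \<in> Arr C \<and> g \<in> Arr C \<and> Cod C f = Dom C g"
  then show "Fm (Cmp C g f) = Cmp D (Fm g) (Fm f)" by (intro comp) (auto simp: hom_def)
qed (use assms in auto)

lemma functor_cats: "functor C D Fo Fm \<Longrightarrow> cat C \<and> cat D"
  unfolding functor_def cat_def by blast

lemma functor_hom: "functor C D Fo Fm \<Longrightarrow> f \<in> hom C a b \<Longrightarrow> Fm f \<in> hom D (Fo a) (Fo b)"
  unfolding functor_def hom_def by blast

lemma functor_comp:
  "functor C D Fo Fm \<Longrightarrow> f \<in> hom C a b \<Longrightarrow> g \<in> hom C b c \<Longrightarrow> Fm (Cmp C g f) = Cmp D (Fm g) (Fm f)"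
  unfolding functor_def hom_def by auto

lemma functor_id: "functor C D Fo Fm \<Longrightarrow> a \<in> Obj C \<Longrightarrow> Fm (Idt C a) = Idt D (Fo a)"
  unfolding functor_def by blast

lemma functor_iso:
  assumes F: "functor C D Fo Fm" and f: "f \<in> hom C a b" "is_iso C f"
  shows "is_iso D (Fm f)"
proof -
  interpret C: cat C using functor_cats[OF F] by blast
  interpret D: cat D using functor_cats[OF F] by blast
  obtain g where g: "g \<in> hom C b a" "Cmp C g f = Idt C a" "Cmp C f g = Idt C b"
    using C.isoE[OF f(2,1)] by blast
  have "a \<in> Obj C" "b \<in> Obj C" using f C.hom_objs by blast+
  then show ?thesis
    using D.isoI[OF functor_hom[OF F f(1)] functor_hom[OF F g(1)]] g
      functor_comp[OF F f(1) g(1)] functor_comp[OF F g(1) f(1)] functor_id[OF F] by simp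
qed

lemma functor_times_id:
  assumes F: "functor C D Fo Fm" and P: "is_product C e x p p1 p2"
    and Q: "is_product C c x q q1 q2" and g: "g \<in> hom C c e"
    and FP: "is_product D (Fo e) (Fo x) (Fo p) (Fm p1) (Fm p2)"
    and FQ: "is_product D (Fo c) (Fo x) (Fo q) (Fm q1) (Fm q2)"
  shows "Fm (times_id C p p1 p2 q q1 q2 g) =
      times_id D (Fo p) (Fm p1) (Fm p2) (Fo q) (Fm q1) (Fm q2) (Fm g)"
proof -
  interpret C: cat C using functor_cats[OF F] by blast
  interpret D: cat D using functor_cats[OF F] by blast
  let ?G = "times_id C p p1 p2 q q1 q2 g"
  note G = C.times_id[OF P Q g]
  have pr: "p1 \<in> hom C p e" "p2 \<in> hom C p x" "q1 \<in> hom C q c"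
    using is_productD[OF P] is_productD[OF Q] by auto
  have "Cmp D (Fm p1) (Fm ?G) = Cmp D (Fm g) (Fm q1)"
    using functor_comp[OF F G(1) pr(1)] functor_comp[OF F pr(3) g] G(2) by simp
  moreover have "Cmp D (Fm p2) (Fm ?G) = Fm q2"
    using functor_comp[OF F G(1) pr(2)] G(3) by simp
  ultimately show ?thesis
    using D.times_id_unique[OF FP FQ functor_hom[OF F g] functor_hom[OF F G(1)]] by blast
qed

text \<open>All terminal objects (products, exponentials) of the same objects are isomorphic, and
  functors preserve isomorphisms.\<close>

lemma functor_preserves_terminal:
  assumes F: "functor C D Fo Fm" and T0: "is_terminal C t0" "is_terminal D (Fo t0)"
    and T: "is_terminal C t"
  shows "is_terminal D (Fo t)"
proof -
  interpret C: cat C using functor_cats[OF F] by blast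
  interpret D: cat D using functor_cats[OF F] by blast
  obtain i where "i \<in> hom C t t0" "is_iso C i" using C.terminal_iso[OF T0(1) T] by blast
  then show ?thesis
    using D.terminal_transfer_iso[OF T0(2) functor_hom[OF F] functor_iso[OF F]] by blast
qed

lemma functor_preserves_product:
  assumes F: "functor C D Fo Fm" and P0: "is_product C a b p0 p01 p02"
    "is_product D (Fo a) (Fo b) (Fo p0) (Fm p01) (Fm p02)"
    and P: "is_product C a b p p1 p2"
  shows "is_product D (Fo a) (Fo b) (Fo p) (Fm p1) (Fm p2)"
proof -
  interpret C: cat C using functor_cats[OF F] by blast
  interpret D: cat D using functor_cats[OF F] by blast
  obtain i where i: "i \<in> hom C p p0" "is_iso C i" "Cmp C p01 i = p1" "Cmp C p02 i = p2"
    using C.product_iso[OF P0(1) P] by blast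
  have "Fm p1 = Cmp D (Fm p01) (Fm i)" "Fm p2 = Cmp D (Fm p02) (Fm i)"
    using i functor_comp[OF F i(1)] is_productD[OF P0(1)] by auto
  then show ?thesis
    using D.product_transfer_iso[OF P0(2) functor_hom[OF F i(1)] functor_iso[OF F i(1,2)]] by simp
qed

lemma functor_preserves_exponential:
  assumes F: "functor C D Fo Fm" and E0: "is_exponential C x y e0 p0 p01 p02 ev0"
    "is_exponential D (Fo x) (Fo y) (Fo e0) (Fo p0) (Fm p01) (Fm p02) (Fm ev0)"
    and E: "is_exponential C x y e p p1 p2 ev"
    and FP: "is_product D (Fo e) (Fo x) (Fo p) (Fm p1) (Fm p2)"
  shows "is_exponential D (Fo x) (Fo y) (Fo e) (Fo p) (Fm p1) (Fm p2) (Fm ev)"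
proof -
  interpret C: cat C using functor_cats[OF F] by blast
  interpret D: cat D using functor_cats[OF F] by blast
  obtain i where i: "i \<in> hom C e e0" "is_iso C i" "Cmp C ev0 (times_id C p0 p01 p02 p p1 p2 i) = ev"
    using C.exponential_iso[OF E0(1) E] by blast
  have P0: "is_product C e0 x p0 p01 p02" "ev0 \<in> hom C p0 y" using is_exponentialD[OF E0(1)] by auto
  have P: "is_product C e x p p1 p2" using is_exponentialD[OF E] by blast
  have FP0: "is_product D (Fo e0) (Fo x) (Fo p0) (Fm p01) (Fm p02)"
    using is_exponentialD[OF E0(2)] by blast
  have "Fm ev = Cmp D (Fm ev0) (Fm (times_id C p0 p01 p02 p p1 p2 i))"
    using functor_comp[OF F C.times_id(1)[OF P0(1) P i(1)] P0(2)] i(3) by simp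
  also have "\<dots> =
      Cmp D (Fm ev0) (times_id D (Fo p0) (Fm p01) (Fm p02) (Fo p) (Fm p1) (Fm p2) (Fm i))"
    using functor_times_id[OF F P0(1) P i(1) FP0 FP] by simp
  finally show ?thesis
    using D.exponential_transfer_iso[OF E0(2) functor_hom[OF F i(1)] functor_iso[OF F i(1,2)] FP]
    by simp
qed

section \<open>Reindexing a category along a map onto its objects\<close>

definition inv_image_cat :: "('o, 'm) cat \<Rightarrow> ('x \<Rightarrow> 'o) \<Rightarrow> 'x set \<Rightarrow> ('x, 'x \<times> 'x \<times> 'm) cat" where
  "inv_image_cat C \<phi> X = \<lparr> Obj = X,
     Arr = {(A, B, f). A \<in> X \<and> B \<in> X \<and> f \<in> hom C (\<phi> A) (\<phi> B)},
     Dom = fst, Cod = (\<lambda>f. fst (snd f)),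
     Idt = (\<lambda>A. (A, A, Idt C (\<phi> A))),
     Cmp = (\<lambda>g f. (fst f, fst (snd g), Cmp C (snd (snd g)) (snd (snd f)))) \<rparr>"

lemma inv_image_cat_simps [simp]:
  "Obj (inv_image_cat C \<phi> X) = X"
  "Idt (inv_image_cat C \<phi> X) A = (A, A, Idt C (\<phi> A))"
  "Cmp (inv_image_cat C \<phi> X) (B', D, g) (A, B, f) = (A, D, Cmp C g f)"
  "Dom (inv_image_cat C \<phi> X) (A, B, f) = A"
  "Cod (inv_image_cat C \<phi> X) (A, B, f) = B"
  unfolding inv_image_cat_def by simp_all

lemma hom_inv_image_cat:
  "(A', B', f) \<in> hom (inv_image_cat C \<phi> X) A B \<longleftrightarrow>
   A' = A \<and> B' = B \<and> A \<in> X \<and> B \<in> X \<and> f \<in> hom C (\<phi> A) (\<phi> B)"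
  unfolding inv_image_cat_def hom_def by auto

lemma hom_inv_image_catE:
  assumes "u \<in> hom (inv_image_cat C \<phi> X) A B"
  obtains f where "u = (A, B, f)" "A \<in> X" "B \<in> X" "f \<in> hom C (\<phi> A) (\<phi> B)"
  using assms by (cases u) (auto simp: hom_inv_image_cat)

locale surj_reindexing = cat C for C :: "('o, 'm) cat" +
  fixes \<phi> :: "'x \<Rightarrow> 'o" and X :: "'x set"
  assumes surj_on_objs: "\<phi> ` X = Obj C"
begin

abbreviation D where "D \<equiv> inv_image_cat C \<phi> X"

lemma obj_in_image: "A \<in> X \<Longrightarrow> \<phi> A \<in> Obj C"
  using surj_on_objs by blast

lemma obj_preimageE:
  assumes "c \<in> Obj C"
  obtains A where "A \<in> X" "\<phi> A = c"
  using assms surj_on_objs by (metis imageE)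

lemma category_inv_image_cat: "category D"
proof (rule categoryI)
  fix f assume "f \<in> Arr D"
  then show "Dom D f \<in> Obj D \<and> Cod D f \<in> Obj D" unfolding inv_image_cat_def by auto
qed (auto simp: hom_inv_image_cat obj_in_image id_in_hom comp_in_hom comp_id_left comp_id_right
  comp_assoc elim!: hom_inv_image_catE)

sublocale D: cat D using category_inv_image_cat by unfold_locales

lemma inv_image_cat_terminal:
  assumes T: "T \<in> X" and terminal: "is_terminal C (\<phi> T)"
  shows "is_terminal D T"
  unfolding is_terminal_def
proof (intro conjI ballI)
  show "T \<in> Obj D" using T by simp
  fix A assume A: "A \<in> Obj D"
  then have "\<phi> A \<in> Obj C" using obj_in_image by simp
  then obtain f where f: "f \<in> hom C (\<phi> A) (\<phi> T)" using terminal unfolding is_terminal_def by blast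
  show "\<exists>!u. u \<in> hom D A T"
  proof (rule ex1I[of _ "(A, T, f)"])
    show "(A, T, f) \<in> hom D A T" using A T f by (simp add: hom_inv_image_cat)
  qed (use f terminal_arr_unique[OF terminal] in \<open>auto elim!: hom_inv_image_catE\<close>)
qed

lemma inv_image_cat_productI:
  assumes X: "A \<in> X" "B \<in> X" "P \<in> X" and Pr: "is_product C (\<phi> A) (\<phi> B) (\<phi> P) f1 f2"
  shows "is_product D A B P (P, A, f1) (P, B, f2)"
proof (rule is_productI)
  show "P \<in> Obj D" using X by simp
  show "(P, A, f1) \<in> hom D P A" "(P, B, f2) \<in> hom D P B"
    using is_productD[OF Pr] X by (auto simp: hom_inv_image_cat)
next
  fix c u v assume "u \<in> hom D c A" "v \<in> hom D c B"
  then obtain g h where gh: "u = (c, A, g)" "v = (c, B, h)" "c \<in> X"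
    "g \<in> hom C (\<phi> c) (\<phi> A)" "h \<in> hom C (\<phi> c) (\<phi> B)" by (auto elim!: hom_inv_image_catE)
  obtain k where "k \<in> hom C (\<phi> c) (\<phi> P)" "Cmp C f1 k = g" "Cmp C f2 k = h"
    using product_pairing_ex[OF Pr gh(4,5)] by blast
  then show "\<exists>w \<in> hom D c P. Cmp D (P, A, f1) w = u \<and> Cmp D (P, B, f2) w = v"
    using gh X by (intro bexI[of _ "(c, P, k)"]) (auto simp: hom_inv_image_cat)
next
  fix c w w' assume "w \<in> hom D c P" "w' \<in> hom D c P"
    "Cmp D (P, A, f1) w = Cmp D (P, A, f1) w'" "Cmp D (P, B, f2) w = Cmp D (P, B, f2) w'"
  then show "w = w'" using product_arr_eqI[OF Pr] by (auto elim!: hom_inv_image_catE)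
qed

lemma inv_image_cat_productD:
  assumes X: "A \<in> X" "B \<in> X" "P \<in> X" and Pr: "is_product D A B P (P, A, f1) (P, B, f2)"
  shows "is_product C (\<phi> A) (\<phi> B) (\<phi> P) f1 f2"
proof (rule is_productI[OF obj_in_image[OF X(3)]])
  show "f1 \<in> hom C (\<phi> P) (\<phi> A)" "f2 \<in> hom C (\<phi> P) (\<phi> B)"
    using is_productD[OF Pr] by (auto simp: hom_inv_image_cat)
next
  fix c g h assume gh: "g \<in> hom C c (\<phi> A)" "h \<in> hom C c (\<phi> B)"
  obtain c' where c': "c' \<in> X" "\<phi> c' = c" using obj_preimageE hom_objs[OF gh(1)] by blast
  have "(c', A, g) \<in> hom D c' A" "(c', B, h) \<in> hom D c' B"
    using c' gh X by (auto simp: hom_inv_image_cat)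
  then obtain u where "u \<in> hom D c' P" "Cmp D (P, A, f1) u = (c', A, g)"
    "Cmp D (P, B, f2) u = (c', B, h)"
    using D.product_pairing_ex[OF Pr] by blast
  then show "\<exists>k \<in> hom C c (\<phi> P). Cmp C f1 k = g \<and> Cmp C f2 k = h"
    using c' by (auto elim!: hom_inv_image_catE)
next
  fix c k k' assume k: "k \<in> hom C c (\<phi> P)" "k' \<in> hom C c (\<phi> P)"
    and eq: "Cmp C f1 k = Cmp C f1 k'" "Cmp C f2 k = Cmp C f2 k'"
  obtain c' where c': "c' \<in> X" "\<phi> c' = c" using obj_preimageE hom_objs[OF k(1)] by blast
  have "(c', P, k) \<in> hom D c' P" "(c', P, k') \<in> hom D c' P"
    using c' k X by (auto simp: hom_inv_image_cat)
  then have "(c', P, k) = (c', P, k')" by (rule D.product_arr_eqI[OF Pr]) (use eq in simp_all)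
  then show "k = k'" by simp
qed

lemma inv_image_cat_productE:
  assumes Pr: "is_product D A B P p1 p2"
  obtains f1 f2 where "A \<in> X" "B \<in> X" "P \<in> X" "p1 = (P, A, f1)" "p2 = (P, B, f2)"
    "is_product C (\<phi> A) (\<phi> B) (\<phi> P) f1 f2"
proof -
  have "p1 \<in> hom D P A" "p2 \<in> hom D P B" using is_productD[OF Pr] by auto
  then obtain f1 f2 where "p1 = (P, A, f1)" "p2 = (P, B, f2)" "A \<in> X" "B \<in> X" "P \<in> X"
    by (auto elim!: hom_inv_image_catE)
  with Pr inv_image_cat_productD that show thesis by blast
qed

lemma inv_image_cat_times_id:
  assumes X: "E \<in> X" "x \<in> X" "P \<in> X" "c \<in> X" "q \<in> X"
    and P: "is_product C (\<phi> E) (\<phi> x) (\<phi> P) f1 f2" and Q: "is_product C (\<phi> c) (\<phi> x) (\<phi> q) g1 g2"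
    and g: "g \<in> hom C (\<phi> c) (\<phi> E)"
  shows "times_id D P (P, E, f1) (P, x, f2) q (q, c, g1) (q, x, g2) (c, E, g) =
         (q, P, times_id C (\<phi> P) f1 f2 (\<phi> q) g1 g2 g)"
proof -
  have PD: "is_product D E x P (P, E, f1) (P, x, f2)"
    and QD: "is_product D c x q (q, c, g1) (q, x, g2)"
    using inv_image_cat_productI X P Q by blast+
  have g1: "g1 \<in> hom C (\<phi> q) (\<phi> c)" using is_productD[OF Q] by auto
  show ?thesis
    by (rule D.times_id_unique[OF PD QD, symmetric])
      (use times_id[OF P Q g] X g g1 in \<open>auto simp: hom_inv_image_cat\<close>)
qed

lemma inv_image_cat_exponential:
  assumes X: "x \<in> X" "y \<in> X" "E \<in> X" "P \<in> X"
    and Exp: "is_exponential C (\<phi> x) (\<phi> y) (\<phi> E) (\<phi> P) f1 f2 ev"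
  shows "is_exponential D x y E P (P, E, f1) (P, x, f2) (P, y, ev)"
proof -
  have P: "is_product C (\<phi> E) (\<phi> x) (\<phi> P) f1 f2" and ev: "ev \<in> hom C (\<phi> P) (\<phi> y)"
    using is_exponentialD[OF Exp] by auto
  have times_id_D: "times_id D P (P, E, f1) (P, x, f2) q q1 q2 (c, E, g) =
      (q, P, times_id C (\<phi> P) f1 f2 (\<phi> q) k1 k2 g)"
    if "c \<in> X" "q \<in> X" "q1 = (q, c, k1)" "q2 = (q, x, k2)"
      "is_product C (\<phi> c) (\<phi> x) (\<phi> q) k1 k2" "g \<in> hom C (\<phi> c) (\<phi> E)" for c q q1 q2 k1 k2 g
    using inv_image_cat_times_id[OF X(3,1,4) that(1,2) P that(5,6)] that(3,4) by simp
  show ?thesis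
  proof (rule D.is_exponentialI)
    show "is_product D E x P (P, E, f1) (P, x, f2)" using inv_image_cat_productI X P by blast
    show "(P, y, ev) \<in> hom D P y" using X ev by (simp add: hom_inv_image_cat)
  next
    fix c q q1 q2 u assume Q: "is_product D c x q q1 q2" and "u \<in> hom D q y"
    then obtain k1 k2 f where Q': "c \<in> X" "q \<in> X" "q1 = (q, c, k1)" "q2 = (q, x, k2)"
      "is_product C (\<phi> c) (\<phi> x) (\<phi> q) k1 k2" and f: "u = (q, y, f)" "f \<in> hom C (\<phi> q) (\<phi> y)"
      by (auto elim!: inv_image_cat_productE hom_inv_image_catE)
    obtain g where "g \<in> hom C (\<phi> c) (\<phi> E)" "Cmp C ev (times_id C (\<phi> P) f1 f2 (\<phi> q) k1 k2 g) = f"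
      using exponential_transpose_ex[OF Exp Q'(5) f(2)] by blast
    then show "\<exists>w \<in> hom D c E. Cmp D (P, y, ev) (times_id D P (P, E, f1) (P, x, f2) q q1 q2 w) = u"
      using times_id_D[OF Q'] Q' X f
      by (intro bexI[of _ "(c, E, g)"]) (auto simp: hom_inv_image_cat)
  next
    fix c q q1 q2 u u' assume Q: "is_product D c x q q1 q2" and "u \<in> hom D c E" "u' \<in> hom D c E"
      and eq: "Cmp D (P, y, ev) (times_id D P (P, E, f1) (P, x, f2) q q1 q2 u) =
               Cmp D (P, y, ev) (times_id D P (P, E, f1) (P, x, f2) q q1 q2 u')"
    then obtain k1 k2 g g' where Q': "c \<in> X" "q \<in> X" "q1 = (q, c, k1)" "q2 = (q, x, k2)"
      "is_product C (\<phi> c) (\<phi> x) (\<phi> q) k1 k2" and g: "u = (c, E, g)" "u' = (c, E, g')"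
      "g \<in> hom C (\<phi> c) (\<phi> E)" "g' \<in> hom C (\<phi> c) (\<phi> E)"
      by (auto elim!: inv_image_cat_productE hom_inv_image_catE)
    have "Cmp C ev (times_id C (\<phi> P) f1 f2 (\<phi> q) k1 k2 g) =
        Cmp C ev (times_id C (\<phi> P) f1 f2 (\<phi> q) k1 k2 g')"
      using eq times_id_D[OF Q' g(3)] times_id_D[OF Q' g(4)] g by simp
    then show "u = u'" using exponential_transpose_unique[OF Exp Q'(5) g(3,4)] g by simp
  qed
qed

lemma functor_from_inv_image_cat: "functor D C \<phi> (\<lambda>u. snd (snd u))"
  by (rule functorI[OF category_inv_image_cat category])
    (auto simp: obj_in_image elim!: hom_inv_image_catE)

lemma functor_to_inv_image_cat:
  assumes \<psi>: "\<And>c. c \<in> Obj C \<Longrightarrow> \<psi> c \<in> X \<and> \<phi> (\<psi> c) = c"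
  shows "functor C D \<psi> (\<lambda>f. (\<psi> (Dom C f), \<psi> (Cod C f), f))"
proof (rule functorI[OF category category_inv_image_cat])
  fix f a b assume f: "f \<in> hom C a b"
  have "Dom C f = a" "Cod C f = b" using f by (simp_all add: hom_iff)
  moreover have "f \<in> hom C (\<phi> (\<psi> a)) (\<phi> (\<psi> b))" using f \<psi> hom_objs[OF f] by simp
  ultimately show "(\<psi> (Dom C f), \<psi> (Cod C f), f) \<in> hom D (\<psi> a) (\<psi> b)"
    using \<psi> hom_objs[OF f] by (simp add: hom_inv_image_cat)
next
  fix f g a b c assume "f \<in> hom C a b" "g \<in> hom C b c"
  then show "(\<psi> (Dom C (Cmp C g f)), \<psi> (Cod C (Cmp C g f)), Cmp C g f) =
      Cmp D (\<psi> (Dom C g), \<psi> (Cod C g), g) (\<psi> (Dom C f), \<psi> (Cod C f), f)"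
    using comp_in_hom by (auto simp: hom_iff)
qed (use \<psi> id_in_hom in \<open>auto simp: hom_iff\<close>)

lemma equivalent_inv_image_cat: "equivalent_cats C D"
proof -
  define \<psi> where "\<psi> = inv_into X \<phi>"
  have \<psi>: "\<psi> c \<in> X" "\<phi> (\<psi> c) = c" if "c \<in> Obj C" for c
    using that surj_on_objs inv_into_into f_inv_into_f unfolding \<psi>_def by metis+
  let ?Fm = "\<lambda>f. (\<psi> (Dom C f), \<psi> (Cod C f), f)" and ?Gm = "\<lambda>u :: 'x \<times> 'x \<times> 'm. snd (snd u)"
  let ?\<epsilon> = "\<lambda>A. (\<psi> (\<phi> A), A, Idt C (\<phi> A))" and ?\<epsilon>' = "\<lambda>A. (A, \<psi> (\<phi> A), Idt C (\<phi> A))"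
  have "nat_iso C C id id (\<phi> \<circ> \<psi>) (?Gm \<circ> ?Fm) (Idt C)"
    unfolding nat_iso_def
    by (auto simp: \<psi> id_in_hom id_iso comp_id_left[OF arr_in_hom] comp_id_right[OF arr_in_hom])
  moreover have "nat_iso D D (\<psi> \<circ> \<phi>) (?Fm \<circ> ?Gm) id id ?\<epsilon>"
    unfolding nat_iso_def
  proof (intro conjI ballI)
    fix A assume A: "A \<in> Obj D"
    then have o: "\<phi> A \<in> Obj C" using obj_in_image by simp
    have "?\<epsilon> A \<in> hom D (\<psi> (\<phi> A)) A" "?\<epsilon>' A \<in> hom D A (\<psi> (\<phi> A))"
      using A o \<psi>[OF o] id_in_hom[OF o] by (simp_all add: hom_inv_image_cat)
    then show "?\<epsilon> A \<in> hom D ((\<psi> \<circ> \<phi>) A) (id A)" "is_iso D (?\<epsilon> A)"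
      using D.isoI comp_id_left[OF id_in_hom[OF o]] \<psi>[OF o] by auto
  next
    fix u assume "u \<in> Arr D"
    then obtain A B f where "u = (A, B, f)" and f: "f \<in> hom C (\<phi> A) (\<phi> B)"
      unfolding inv_image_cat_def by auto
    then show "Cmp D (id u) (?\<epsilon> (Dom D u)) = Cmp D (?\<epsilon> (Cod D u)) ((?Fm \<circ> ?Gm) u)"
      using comp_id_left[OF f] comp_id_right[OF f] f by (simp add: hom_iff)
  qed
  ultimately show ?thesis
    unfolding equivalent_cats_def
    using functor_to_inv_image_cat \<psi> functor_from_inv_image_cat by blast
qed

end

section \<open>The free cartesian closed category\<close>

lemma BiMag_simps [simp]:
  "Base a \<in> BiMag S \<longleftrightarrow> a \<in> S" "One \<in> BiMag S"
  "Prod A B \<in> BiMag S \<longleftrightarrow> A \<in> BiMag S \<and> B \<in> BiMag S"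
  "Exp A B \<in> BiMag S \<longleftrightarrow> A \<in> BiMag S \<and> B \<in> BiMag S"
  unfolding BiMag_def by auto

lemma typed_BiMag: "typed S t A B \<Longrightarrow> A \<in> BiMag S \<and> B \<in> BiMag S"
  by (induction rule: typed.induct) auto

fun prod_left :: "'a bimag \<Rightarrow> 'a bimag" where
  "prod_left (Prod A B) = A"
| "prod_left A = A"

fun prod_right :: "'a bimag \<Rightarrow> 'a bimag" where
  "prod_right (Prod A B) = B"
| "prod_right A = A"

text \<open>A typable term determines its source and target; the interpretation of \<^const>\<open>TLam\<close>
  below needs the source of the body.\<close>

primrec tdom :: "'a tm \<Rightarrow> 'a bimag" where
  "tdom (TId A) = A"
| "tdom (TComp g f) = tdom f"
| "tdom (TBang A) = A"
| "tdom (TFst A B) = Prod A B"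
| "tdom (TSnd A B) = Prod A B"
| "tdom (TPair f g) = tdom f"
| "tdom (TEv X Y) = Prod (Exp X Y) X"
| "tdom (TLam f) = prod_left (tdom f)"

primrec tcod :: "'a tm \<Rightarrow> 'a bimag" where
  "tcod (TId A) = A"
| "tcod (TComp g f) = tcod g"
| "tcod (TBang A) = One"
| "tcod (TFst A B) = A"
| "tcod (TSnd A B) = B"
| "tcod (TPair f g) = Prod (tcod f) (tcod g)"
| "tcod (TEv X Y) = Y"
| "tcod (TLam f) = Exp (prod_right (tdom f)) (tcod f)"

lemma typed_tdom_tcod: "typed S t A B \<Longrightarrow> tdom t = A \<and> tcod t = B"
  by (induction rule: typed.induct) auto

lemma typed_unique: "typed S t A B \<Longrightarrow> typed S t A' B' \<Longrightarrow> A = A' \<and> B = B'"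
  using typed_tdom_tcod by metis

lemma teq_typed: "teq S s t \<Longrightarrow> \<exists>A B. typed S s A B \<and> typed S t A B"
proof (induction rule: teq.induct)
  case (e_trans f g h)
  then show ?case using typed_unique by metis
next
  case (e_comp f f' g g' A B C)
  then show ?case using typed_unique typed.t_comp by metis
next
  case (e_pair f f' g g' C A B)
  then show ?case using typed_unique typed.t_pair by metis
next
  case (e_lam f f' C X Y)
  then show ?case using typed_unique typed.t_lam by metis
next
  case (e_pair_eta h C A B)
  then show ?case using typed_BiMag[OF e_pair_eta] by (auto intro!: typed.intros)
next
  case (e_beta f C X Y)
  then show ?case using typed_BiMag[OF e_beta] by (auto intro!: typed.intros)
next
  case (e_eta g C X Y)
  then have "C \<in> BiMag S" "X \<in> BiMag S" "Y \<in> BiMag S" using typed_BiMag[OF e_eta] by auto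
  then have "typed S (TComp (TEv X Y) (TPair (TComp g (TFst C X)) (TSnd C X))) (Prod C X) Y"
    using typed.t_comp[OF typed.t_pair[OF typed.t_comp[OF typed.t_fst e_eta] typed.t_snd]
      typed.t_ev]
    by blast
  then show ?case using e_eta typed.t_lam by blast
qed (use typed_BiMag in \<open>blast intro: typed.intros\<close>)+

lemma teq_typedD: "teq S s t \<Longrightarrow> typed S s A B \<Longrightarrow> typed S t A B"
  using teq_typed typed_unique by metis

lemma teq_prod_ext:
  assumes t: "typed S t C (Prod A B)" and s: "typed S s C (Prod A B)"
    and fst: "teq S (TComp (TFst A B) t) (TComp (TFst A B) s)"
    and snd: "teq S (TComp (TSnd A B) t) (TComp (TSnd A B) s)"
  shows "teq S t s"
proof -
  have "A \<in> BiMag S" "B \<in> BiMag S" using typed_BiMag[OF t] by auto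
  then have "teq S (TPair (TComp (TFst A B) t) (TComp (TSnd A B) t))
      (TPair (TComp (TFst A B) s) (TComp (TSnd A B) s))"
    using teq.e_pair[OF fst snd] t by (blast intro: typed.intros)
  then show ?thesis
    using teq.e_sym[OF teq.e_pair_eta[OF t]] teq.e_pair_eta[OF s] teq.e_trans by blast
qed

lemma teq_exp_ext:
  assumes s: "typed S s C (Exp X Y)" and s': "typed S s' C (Exp X Y)"
    and eq: "teq S (TComp (TEv X Y) (TPair (TComp s (TFst C X)) (TSnd C X)))
                   (TComp (TEv X Y) (TPair (TComp s' (TFst C X)) (TSnd C X)))"
  shows "teq S s s'"
proof -
  have "C \<in> BiMag S" "X \<in> BiMag S" "Y \<in> BiMag S" using typed_BiMag[OF s] by auto
  then have "teq S (TLam (TComp (TEv X Y) (TPair (TComp s (TFst C X)) (TSnd C X))))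
      (TLam (TComp (TEv X Y) (TPair (TComp s' (TFst C X)) (TSnd C X))))"
    using teq.e_lam[OF eq] s by (blast intro: typed.intros)
  then show ?thesis using teq.e_sym[OF teq.e_eta[OF s]] teq.e_eta[OF s'] teq.e_trans by blast
qed

definition cls :: "'a set \<Rightarrow> 'a tm \<Rightarrow> 'a tm set" where
  "cls S t = {u. teq S t u}"

lemma cls_eqI: "teq S s t \<Longrightarrow> cls S s = cls S t"
  unfolding cls_def using teq.e_sym teq.e_trans by blast

lemma cls_eqD: "typed S s A B \<Longrightarrow> cls S s = cls S t \<Longrightarrow> teq S s t"
  unfolding cls_def using teq.e_refl teq.e_sym by blast

lemma teq_some_cls: "typed S t A B \<Longrightarrow> teq S t (SOME u. u \<in> cls S t)"
  unfolding cls_def using teq.e_refl by (metis mem_Collect_eq someI)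

lemma CFam_simps [simp]:
  "Obj (CFam S) = BiMag S" "Dom (CFam S) (A, B, c) = A" "Cod (CFam S) (A, B, c) = B"
  "Idt (CFam S) A = (A, A, cls S (TId A))"
  unfolding CFam_def cls_def by simp_all

lemma hom_CFam: "u \<in> hom (CFam S) A B \<longleftrightarrow> (\<exists>t. u = (A, B, cls S t) \<and> typed S t A B)"
  unfolding hom_def CFam_def cls_def by auto

lemma Cmp_CFam:
  assumes f: "typed S f A B" and g: "typed S g B C"
  shows "Cmp (CFam S) (B, C, cls S g) (A, B, cls S f) = (A, C, cls S (TComp g f))"
proof -
  have "teq S (TComp g f) (TComp (SOME u. u \<in> cls S g) (SOME u. u \<in> cls S f))"
    using teq.e_comp[OF teq_some_cls[OF f] teq_some_cls[OF g] f g] .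
  then show ?thesis unfolding CFam_def using cls_eqI[of S] by (simp add: cls_def)
qed

lemma category_CFam: "category (CFam S)"
proof (rule categoryI)
  fix f assume "f \<in> Arr (CFam S)"
  then show "Dom (CFam S) f \<in> Obj (CFam S) \<and> Cod (CFam S) f \<in> Obj (CFam S)"
    unfolding CFam_def by (auto dest: typed_BiMag)
next
  fix f g a b c assume "f \<in> hom (CFam S) a b" "g \<in> hom (CFam S) b c"
  then show "Cmp (CFam S) g f \<in> hom (CFam S) a c"
    by (auto simp: hom_CFam Cmp_CFam intro: typed.t_comp)
next
  fix f a b assume "f \<in> hom (CFam S) a b"
  then obtain t where t: "f = (a, b, cls S t)" "typed S t a b" by (auto simp: hom_CFam)
  then have "a \<in> BiMag S" "b \<in> BiMag S" using typed_BiMag by auto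
  then show "Cmp (CFam S) (Idt (CFam S) b) f = f \<and> Cmp (CFam S) f (Idt (CFam S) a) = f"
    using t Cmp_CFam[OF t(2) typed.t_id] Cmp_CFam[OF typed.t_id t(2)]
      cls_eqI[OF teq.e_idl[OF t(2)]] cls_eqI[OF teq.e_idr[OF t(2)]] by simp
next
  fix f g h a b c d
  assume "f \<in> hom (CFam S) a b" "g \<in> hom (CFam S) b c" "h \<in> hom (CFam S) c d"
  then obtain t s r where "f = (a, b, cls S t)" "g = (b, c, cls S s)" "h = (c, d, cls S r)"
    and ty: "typed S t a b" "typed S s b c" "typed S r c d" by (auto simp: hom_CFam)
  then show "Cmp (CFam S) h (Cmp (CFam S) g f) = Cmp (CFam S) (Cmp (CFam S) h g) f"
    using cls_eqI[OF teq.e_assoc[OF ty]] by (simp add: Cmp_CFam typed.t_comp)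
qed (auto simp: hom_CFam intro: typed.t_id)

interpretation CFam: cat "CFam S" for S
  using category_CFam by unfold_locales

lemma CFam_terminal: "is_terminal (CFam S) One"
  unfolding is_terminal_def
proof (intro conjI ballI)
  fix A assume A: "A \<in> Obj (CFam S)"
  show "\<exists>!f. f \<in> hom (CFam S) A One"
  proof (rule ex1I[of _ "(A, One, cls S (TBang A))"])
    fix f assume "f \<in> hom (CFam S) A One"
    then obtain t where "f = (A, One, cls S t)" "typed S t A One" by (auto simp: hom_CFam)
    then show "f = (A, One, cls S (TBang A))" using cls_eqI[OF teq.e_bang] by simp
  qed (use A in \<open>auto simp: hom_CFam intro: typed.t_bang\<close>)
qed simp

lemma CFam_product:
  assumes AB: "A \<in> BiMag S" "B \<in> BiMag S"
  shows "is_product (CFam S) A B (Prod A B)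
           (Prod A B, A, cls S (TFst A B)) (Prod A B, B, cls S (TSnd A B))"
proof -
  have fst: "typed S (TFst A B) (Prod A B) A" and snd: "typed S (TSnd A B) (Prod A B) B"
    using AB by (auto intro: typed.intros)
  show ?thesis
  proof (rule is_productI)
    show "(Prod A B, A, cls S (TFst A B)) \<in> hom (CFam S) (Prod A B) A"
      "(Prod A B, B, cls S (TSnd A B)) \<in> hom (CFam S) (Prod A B) B"
      using fst snd by (auto simp: hom_CFam)
  next
    fix c f g assume "f \<in> hom (CFam S) c A" "g \<in> hom (CFam S) c B"
    then obtain t s where ts: "f = (c, A, cls S t)" "g = (c, B, cls S s)"
      "typed S t c A" "typed S s c B" by (auto simp: hom_CFam)
    then show "\<exists>h \<in> hom (CFam S) c (Prod A B).
        Cmp (CFam S) (Prod A B, A, cls S (TFst A B)) h = f \<and>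
        Cmp (CFam S) (Prod A B, B, cls S (TSnd A B)) h = g"
      using typed.t_pair[OF ts(3,4)] Cmp_CFam[OF typed.t_pair[OF ts(3,4)] fst]
        Cmp_CFam[OF typed.t_pair[OF ts(3,4)] snd] cls_eqI[OF teq.e_fst[OF ts(3,4)]]
        cls_eqI[OF teq.e_snd[OF ts(3,4)]]
      by (intro bexI[of _ "(c, Prod A B, cls S (TPair t s))"]) (auto simp: hom_CFam)
  next
    fix c h h' assume "h \<in> hom (CFam S) c (Prod A B)" "h' \<in> hom (CFam S) c (Prod A B)"
      and eq: "Cmp (CFam S) (Prod A B, A, cls S (TFst A B)) h =
          Cmp (CFam S) (Prod A B, A, cls S (TFst A B)) h'"
        "Cmp (CFam S) (Prod A B, B, cls S (TSnd A B)) h =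
          Cmp (CFam S) (Prod A B, B, cls S (TSnd A B)) h'"
    then obtain t s where ts: "h = (c, Prod A B, cls S t)" "h' = (c, Prod A B, cls S s)"
      "typed S t c (Prod A B)" "typed S s c (Prod A B)" by (auto simp: hom_CFam)
    have "teq S (TComp (TFst A B) t) (TComp (TFst A B) s)"
      "teq S (TComp (TSnd A B) t) (TComp (TSnd A B) s)"
      using eq ts cls_eqD[OF typed.t_comp[OF ts(3) fst]] cls_eqD[OF typed.t_comp[OF ts(3) snd]]
      by (simp_all add: Cmp_CFam fst snd)
    then show "h = h'" using teq_prod_ext[OF ts(3,4)] ts cls_eqI by metis
  qed (use AB in simp)
qed

lemma CFam_times_id:
  assumes g: "typed S g c E" and X: "X \<in> BiMag S"
  shows "times_id (CFam S)
      (Prod E X) (Prod E X, E, cls S (TFst E X)) (Prod E X, X, cls S (TSnd E X))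
      (Prod c X) (Prod c X, c, cls S (TFst c X)) (Prod c X, X, cls S (TSnd c X)) (c, E, cls S g) =
    (Prod c X, Prod E X, cls S (TPair (TComp g (TFst c X)) (TSnd c X)))"
proof -
  have cE: "c \<in> BiMag S" "E \<in> BiMag S" using typed_BiMag[OF g] by auto
  have fst: "typed S (TFst c X) (Prod c X) c" "typed S (TFst E X) (Prod E X) E"
    and snd: "typed S (TSnd c X) (Prod c X) X" "typed S (TSnd E X) (Prod E X) X"
    using cE X by (auto intro: typed.intros)
  have pair: "typed S (TPair (TComp g (TFst c X)) (TSnd c X)) (Prod c X) (Prod E X)"
    using typed.t_pair[OF typed.t_comp[OF fst(1) g] snd(1)] .
  show ?thesis
    by (rule CFam.times_id_unique[OF CFam_product[OF cE(2) X] CFam_product[OF cE(1) X], symmetric])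
      (use g pair Cmp_CFam[OF pair fst(2)] Cmp_CFam[OF pair snd(2)] Cmp_CFam[OF fst(1) g]
        cls_eqI[OF teq.e_fst[OF typed.t_comp[OF fst(1) g] snd(1)]]
        cls_eqI[OF teq.e_snd[OF typed.t_comp[OF fst(1) g] snd(1)]] in \<open>auto simp: hom_CFam\<close>)
qed

lemma CFam_ev_times_id:
  assumes g: "typed S g c (Exp X Y)" and X: "X \<in> BiMag S" and Y: "Y \<in> BiMag S"
  shows "Cmp (CFam S) (Prod (Exp X Y) X, Y, cls S (TEv X Y))
      (times_id (CFam S) (Prod (Exp X Y) X)
        (Prod (Exp X Y) X, Exp X Y, cls S (TFst (Exp X Y) X))
        (Prod (Exp X Y) X, X, cls S (TSnd (Exp X Y) X))
        (Prod c X) (Prod c X, c, cls S (TFst c X)) (Prod c X, X, cls S (TSnd c X))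
        (c, Exp X Y, cls S g)) =
    (Prod c X, Y, cls S (TComp (TEv X Y) (TPair (TComp g (TFst c X)) (TSnd c X))))"
proof -
  have "c \<in> BiMag S" using typed_BiMag[OF g] by blast
  then have "typed S (TPair (TComp g (TFst c X)) (TSnd c X)) (Prod c X) (Prod (Exp X Y) X)"
    using g X by (blast intro: typed.intros)
  then show ?thesis using CFam_times_id[OF g X] Cmp_CFam typed.t_ev[OF X Y] by simp
qed

lemma CFam_exponential:
  assumes X: "X \<in> BiMag S" and Y: "Y \<in> BiMag S"
  shows "is_exponential (CFam S) X Y (Exp X Y) (Prod (Exp X Y) X)
     (Prod (Exp X Y) X, Exp X Y, cls S (TFst (Exp X Y) X))
     (Prod (Exp X Y) X, X, cls S (TSnd (Exp X Y) X))
     (Prod (Exp X Y) X, Y, cls S (TEv X Y))"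
proof (rule CFam.is_exponentialI_chosen_products[OF CFam_product], goal_cases)
  case 3
  show ?case using typed.t_ev[OF X Y] by (auto simp: hom_CFam)
next
  case (4 c)
  then have c: "c \<in> BiMag S" by simp
  let ?ev = "(Prod (Exp X Y) X, Y, cls S (TEv X Y))"
  let ?times = "times_id (CFam S) (Prod (Exp X Y) X)
     (Prod (Exp X Y) X, Exp X Y, cls S (TFst (Exp X Y) X))
     (Prod (Exp X Y) X, X, cls S (TSnd (Exp X Y) X))
     (Prod c X) (Prod c X, c, cls S (TFst c X)) (Prod c X, X, cls S (TSnd c X))"
  let ?app = "\<lambda>g. TComp (TEv X Y) (TPair (TComp g (TFst c X)) (TSnd c X))"
  have app: "typed S (?app g) (Prod c X) Y" if "typed S g c (Exp X Y)" for g
    using that c X Y by (blast intro: typed.intros)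
  note ev_times = CFam_ev_times_id[OF _ X Y]
  show ?case
  proof (intro exI conjI ballI impI)
    show "is_product (CFam S) c X (Prod c X)
        (Prod c X, c, cls S (TFst c X)) (Prod c X, X, cls S (TSnd c X))"
      using CFam_product[OF c X] .
  next
    fix f assume "f \<in> hom (CFam S) (Prod c X) Y"
    then obtain t where t: "f = (Prod c X, Y, cls S t)" "typed S t (Prod c X) Y"
      by (auto simp: hom_CFam)
    then have "typed S (TLam t) c (Exp X Y)" using typed.t_lam by blast
    then show "\<exists>g \<in> hom (CFam S) c (Exp X Y). Cmp (CFam S) ?ev (?times g) = f"
      using ev_times t cls_eqI[OF teq.e_beta[OF t(2)]]
      by (intro bexI[of _ "(c, Exp X Y, cls S (TLam t))"]) (auto simp: hom_CFam)
  next
    fix g g' assume "g \<in> hom (CFam S) c (Exp X Y)" "g' \<in> hom (CFam S) c (Exp X Y)"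
      and eq: "Cmp (CFam S) ?ev (?times g) = Cmp (CFam S) ?ev (?times g')"
    then obtain s s' where s: "g = (c, Exp X Y, cls S s)" "g' = (c, Exp X Y, cls S s')"
      "typed S s c (Exp X Y)" "typed S s' c (Exp X Y)" by (auto simp: hom_CFam)
    then have "teq S (?app s) (?app s')" using eq ev_times cls_eqD[OF app[OF s(3)]] by simp
    then show "g = g'" using teq_exp_ext[OF s(3,4)] s cls_eqI by metis
  qed
qed (use X Y in simp_all)

section \<open>Interpreting the free cartesian closed category\<close>

lemma (in cat) exponential_over_product:
  assumes E: "is_exponential C x y e p p1 p2 ev" and Q: "is_product C e x q q1 q2"
  shows "\<exists>ev'. is_exponential C x y e q q1 q2 ev'"
proof -
  have "e \<in> Obj C" using is_productD[OF Q] hom_objs by blast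
  then show ?thesis using exponential_transfer_iso[OF E id_in_hom id_iso Q] by blast
qed

locale chosen_ccc = cat C for C :: "('o, 'm) cat" +
  fixes one :: 'o
    and prd :: "'o \<Rightarrow> 'o \<Rightarrow> 'o" and pr1 pr2 :: "'o \<Rightarrow> 'o \<Rightarrow> 'm"
    and expo :: "'o \<Rightarrow> 'o \<Rightarrow> 'o" and ev_arr :: "'o \<Rightarrow> 'o \<Rightarrow> 'm"
  assumes terminal_one: "is_terminal C one"
    and product_prd: "a \<in> Obj C \<Longrightarrow> b \<in> Obj C \<Longrightarrow> is_product C a b (prd a b) (pr1 a b) (pr2 a b)"
    and exponential_expo: "x \<in> Obj C \<Longrightarrow> y \<in> Obj C \<Longrightarrow>
       is_exponential C x y (expo x y) (prd (expo x y) x) (pr1 (expo x y) x) (pr2 (expo x y) x)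
         (ev_arr x y)"

lemma cartesian_closed_chosen_ccc:
  assumes cc: "cartesian_closed C"
  shows "\<exists>one prd pr1 pr2 expo ev_arr. chosen_ccc C one prd pr1 pr2 expo ev_arr"
proof -
  interpret cat C using cc by (simp add: cartesian_closed_def cat_def)
  obtain one where one: "is_terminal C one" using cc unfolding cartesian_closed_def by blast
  obtain prd pr1 pr2
    where prd: "\<And>a b. a \<in> Obj C \<Longrightarrow> b \<in> Obj C \<Longrightarrow> is_product C a b (prd a b) (pr1 a b) (pr2 a b)"
    using cc unfolding cartesian_closed_def by metis
  have "\<exists>e ev. is_exponential C x y e (prd e x) (pr1 e x) (pr2 e x) ev"
    if xy: "x \<in> Obj C" "y \<in> Obj C" for x y
  proof -
    obtain e p p1 p2 ev where E: "is_exponential C x y e p p1 p2 ev"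
      using cc xy unfolding cartesian_closed_def by blast
    then show ?thesis
      using exponential_over_product[OF E prd[OF exponential_obj[OF E] xy(1)]] by blast
  qed
  then obtain expo ev_arr where "\<And>x y. x \<in> Obj C \<Longrightarrow> y \<in> Obj C \<Longrightarrow>
      is_exponential C x y (expo x y) (prd (expo x y) x) (pr1 (expo x y) x) (pr2 (expo x y) x)
        (ev_arr x y)"
    by metis
  then have "chosen_ccc C one prd pr1 pr2 expo ev_arr"
    by unfold_locales (use one prd in auto)
  then show ?thesis by blast
qed

context chosen_ccc
begin

lemma one_obj: "one \<in> Obj C"
  using terminal_one unfolding is_terminal_def by blast

lemma prd_obj: "a \<in> Obj C \<Longrightarrow> b \<in> Obj C \<Longrightarrow> prd a b \<in> Obj C"
  using is_productD[OF product_prd] by blast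

lemma expo_obj: "x \<in> Obj C \<Longrightarrow> y \<in> Obj C \<Longrightarrow> expo x y \<in> Obj C"
  using exponential_obj[OF exponential_expo] .

lemma pr_in_hom:
  "a \<in> Obj C \<Longrightarrow> b \<in> Obj C \<Longrightarrow> pr1 a b \<in> hom C (prd a b) a"
  "a \<in> Obj C \<Longrightarrow> b \<in> Obj C \<Longrightarrow> pr2 a b \<in> hom C (prd a b) b"
  using is_productD[OF product_prd] by blast+

lemma ev_arr_in_hom: "x \<in> Obj C \<Longrightarrow> y \<in> Obj C \<Longrightarrow> ev_arr x y \<in> hom C (prd (expo x y) x) y"
  using is_exponentialD[OF exponential_expo] by blast

definition bang :: "'o \<Rightarrow> 'm" where
  "bang a = (THE h. h \<in> hom C a one)"

lemma bang_in_hom: "a \<in> Obj C \<Longrightarrow> bang a \<in> hom C a one"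
  unfolding bang_def using terminal_one theI'[of "\<lambda>h. h \<in> hom C a one"]
  unfolding is_terminal_def by blast

text \<open>Source and target are read off the arguments, so that the interpretation of terms
  below needs no typing information for pairs.\<close>

definition pairing :: "'m \<Rightarrow> 'm \<Rightarrow> 'm" where
  "pairing f g = (THE h. h \<in> hom C (Dom C f) (prd (Cod C f) (Cod C g)) \<and>
     Cmp C (pr1 (Cod C f) (Cod C g)) h = f \<and> Cmp C (pr2 (Cod C f) (Cod C g)) h = g)"

lemma pairing:
  assumes f: "f \<in> hom C c a" and g: "g \<in> hom C c b"
  shows "pairing f g \<in> hom C c (prd a b)"
    and "Cmp C (pr1 a b) (pairing f g) = f" and "Cmp C (pr2 a b) (pairing f g) = g"
proof -
  have P: "is_product C a b (prd a b) (pr1 a b) (pr2 a b)" using product_prd hom_objs f g by blast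
  obtain h where h: "h \<in> hom C c (prd a b)" "Cmp C (pr1 a b) h = f" "Cmp C (pr2 a b) h = g"
    using product_pairing_ex[OF P f g] by blast
  have "\<exists>!h. h \<in> hom C c (prd a b) \<and> Cmp C (pr1 a b) h = f \<and> Cmp C (pr2 a b) h = g"
  proof (rule ex1I[of _ h])
    fix h' assume "h' \<in> hom C c (prd a b) \<and> Cmp C (pr1 a b) h' = f \<and> Cmp C (pr2 a b) h' = g"
    then show "h' = h" using product_arr_eqI[OF P _ h(1)] h by metis
  qed (use h in simp)
  from theI'[OF this] f g
  show "pairing f g \<in> hom C c (prd a b)"
    and "Cmp C (pr1 a b) (pairing f g) = f" and "Cmp C (pr2 a b) (pairing f g) = g"
    unfolding pairing_def by (simp_all add: hom_iff)
qed

lemma pairing_eta: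
  assumes "a \<in> Obj C" "b \<in> Obj C" and h: "h \<in> hom C c (prd a b)"
  shows "pairing (Cmp C (pr1 a b) h) (Cmp C (pr2 a b) h) = h"
proof -
  have "Cmp C (pr1 a b) h \<in> hom C c a" "Cmp C (pr2 a b) h \<in> hom C c b"
    using comp_in_hom[OF h] pr_in_hom assms by auto
  from pairing[OF this] show ?thesis
    using product_arr_eqI[OF product_prd[OF assms(1,2)] _ h] by metis
qed

lemma pairing_eq_times_id:
  assumes "c \<in> Obj C" "x \<in> Obj C" "e \<in> Obj C" and g: "g \<in> hom C c e"
  shows "pairing (Cmp C g (pr1 c x)) (pr2 c x) =
         times_id C (prd e x) (pr1 e x) (pr2 e x) (prd c x) (pr1 c x) (pr2 c x) g"
proof -
  have "Cmp C g (pr1 c x) \<in> hom C (prd c x) e" "pr2 c x \<in> hom C (prd c x) x"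
    using comp_in_hom[OF _ g] pr_in_hom assms by auto
  from pairing[OF this] show ?thesis
    by (intro times_id_unique[OF product_prd product_prd g]) (use assms in auto)
qed

definition lam :: "'o \<Rightarrow> 'o \<Rightarrow> 'm \<Rightarrow> 'm" where
  "lam c x f = (THE g. g \<in> hom C c (expo x (Cod C f)) \<and>
     Cmp C (ev_arr x (Cod C f)) (pairing (Cmp C g (pr1 c x)) (pr2 c x)) = f)"

lemma lam:
  assumes o: "c \<in> Obj C" "x \<in> Obj C" "y \<in> Obj C" and f: "f \<in> hom C (prd c x) y"
  shows "lam c x f \<in> hom C c (expo x y)"
    and "Cmp C (ev_arr x y) (pairing (Cmp C (lam c x f) (pr1 c x)) (pr2 c x)) = f"
proof -
  note E = exponential_expo[OF o(2,3)] and P = product_prd[OF o(1,2)]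
  have eq: "pairing (Cmp C g (pr1 c x)) (pr2 c x) =
      times_id C (prd (expo x y) x) (pr1 (expo x y) x) (pr2 (expo x y) x)
        (prd c x) (pr1 c x) (pr2 c x) g"
    if "g \<in> hom C c (expo x y)" for g
    using pairing_eq_times_id[OF o(1,2) expo_obj[OF o(2,3)] that] .
  obtain g where g: "g \<in> hom C c (expo x y)"
    "Cmp C (ev_arr x y) (pairing (Cmp C g (pr1 c x)) (pr2 c x)) = f"
    using exponential_transpose_ex[OF E P f] eq by auto
  have "\<exists>!g. g \<in> hom C c (expo x y) \<and>
      Cmp C (ev_arr x y) (pairing (Cmp C g (pr1 c x)) (pr2 c x)) = f"
  proof (rule ex1I[of _ g])
    fix g' assume "g' \<in> hom C c (expo x y) \<and>
        Cmp C (ev_arr x y) (pairing (Cmp C g' (pr1 c x)) (pr2 c x)) = f"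
    then show "g' = g" using exponential_transpose_unique[OF E P _ g(1)] g eq by metis
  qed (use g in simp)
  from theI'[OF this] f
  show "lam c x f \<in> hom C c (expo x y)"
    and "Cmp C (ev_arr x y) (pairing (Cmp C (lam c x f) (pr1 c x)) (pr2 c x)) = f"
    unfolding lam_def by (simp_all add: hom_iff)
qed

lemma lam_eta:
  assumes o: "c \<in> Obj C" "x \<in> Obj C" "y \<in> Obj C" and g: "g \<in> hom C c (expo x y)"
  shows "lam c x (Cmp C (ev_arr x y) (pairing (Cmp C g (pr1 c x)) (pr2 c x))) = g"
proof -
  let ?f = "Cmp C (ev_arr x y) (pairing (Cmp C g (pr1 c x)) (pr2 c x))"
  have "Cmp C g (pr1 c x) \<in> hom C (prd c x) (expo x y)" "pr2 c x \<in> hom C (prd c x) x"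
    using comp_in_hom[OF _ g] pr_in_hom o by auto
  then have f: "?f \<in> hom C (prd c x) y" using pairing(1) comp_in_hom ev_arr_in_hom o by blast
  note L = lam[OF o f]
  show ?thesis
    using exponential_transpose_unique[OF exponential_expo[OF o(2,3)] product_prd[OF o(1,2)] L(1) g]
      L(2) pairing_eq_times_id[OF o(1,2) expo_obj[OF o(2,3)]] L(1) g by simp
qed

primrec sem_obj :: "'o bimag \<Rightarrow> 'o" where
  "sem_obj (Base a) = a"
| "sem_obj One = one"
| "sem_obj (Prod A B) = prd (sem_obj A) (sem_obj B)"
| "sem_obj (Exp X Y) = expo (sem_obj X) (sem_obj Y)"

primrec sem_tm :: "'o tm \<Rightarrow> 'm" where
  "sem_tm (TId A) = Idt C (sem_obj A)"
| "sem_tm (TComp g f) = Cmp C (sem_tm g) (sem_tm f)"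
| "sem_tm (TBang A) = bang (sem_obj A)"
| "sem_tm (TFst A B) = pr1 (sem_obj A) (sem_obj B)"
| "sem_tm (TSnd A B) = pr2 (sem_obj A) (sem_obj B)"
| "sem_tm (TPair f g) = pairing (sem_tm f) (sem_tm g)"
| "sem_tm (TEv X Y) = ev_arr (sem_obj X) (sem_obj Y)"
| "sem_tm (TLam f) = lam (sem_obj (prod_left (tdom f))) (sem_obj (prod_right (tdom f))) (sem_tm f)"

lemma sem_obj_in_Obj: "A \<in> BiMag (Obj C) \<Longrightarrow> sem_obj A \<in> Obj C"
  by (induction A) (auto simp: one_obj prd_obj expo_obj)

lemma sem_tm_in_hom: "typed (Obj C) t A B \<Longrightarrow> sem_tm t \<in> hom C (sem_obj A) (sem_obj B)"
proof (induction rule: typed.induct)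
  case (t_comp f A B g C')
  then show ?case using comp_in_hom by simp
next
  case (t_pair f C' A g B)
  then show ?case using pairing(1) by simp
next
  case (t_lam f C' X Y)
  then show ?case
    using lam(1) typed_BiMag[OF t_lam.hyps] typed_tdom_tcod[OF t_lam.hyps]
    by (simp add: sem_obj_in_Obj)
qed (auto simp: id_in_hom bang_in_hom pr_in_hom ev_arr_in_hom sem_obj_in_Obj)

lemma sem_tm_respects_teq: "teq (Obj C) s t \<Longrightarrow> sem_tm s = sem_tm t"
proof (induction rule: teq.induct)
  case (e_lam f f' C' X Y)
  then have "tdom f' = tdom f" using teq_typedD typed_tdom_tcod by metis
  then show ?case using e_lam.IH by simp
next
  case (e_idl f A B)
  then show ?case using comp_id_left[OF sem_tm_in_hom] by simp
next
  case (e_idr f A B)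
  then show ?case using comp_id_right[OF sem_tm_in_hom] by simp
next
  case (e_assoc f A B g C' h D)
  then show ?case using comp_assoc[OF sem_tm_in_hom sem_tm_in_hom sem_tm_in_hom] by simp
next
  case (e_bang f A)
  then have "sem_tm f \<in> hom C (sem_obj A) one" "sem_obj A \<in> Obj C"
    using sem_tm_in_hom typed_BiMag sem_obj_in_Obj by fastforce+
  then show ?case using terminal_arr_unique[OF terminal_one _ bang_in_hom] by simp
next
  case (e_fst f C' A g B)
  then show ?case using pairing(2)[OF sem_tm_in_hom sem_tm_in_hom] by simp
next
  case (e_snd f C' A g B)
  then show ?case using pairing(3)[OF sem_tm_in_hom sem_tm_in_hom] by simp
next
  case (e_pair_eta h C' A B)
  then show ?case
    using pairing_eta sem_tm_in_hom[OF e_pair_eta] typed_BiMag[OF e_pair_eta]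
    by (simp add: sem_obj_in_Obj)
next
  case (e_beta f C' X Y)
  then show ?case
    using lam(2) sem_tm_in_hom[OF e_beta] typed_BiMag[OF e_beta] typed_tdom_tcod[OF e_beta]
    by (simp add: sem_obj_in_Obj)
next
  case (e_eta g C' X Y)
  then show ?case
    using lam_eta sem_tm_in_hom[OF e_eta] typed_BiMag[OF e_eta] typed_tdom_tcod[OF e_eta]
    by (simp add: sem_obj_in_Obj)
qed simp_all

lemma sem_obj_surj: "sem_obj ` BiMag (Obj C) = Obj C"
proof -
  have "c \<in> sem_obj ` BiMag (Obj C)" if "c \<in> Obj C" for c
    using that image_eqI[of c sem_obj "Base c"] by simp
  then show ?thesis using sem_obj_in_Obj by blast
qed

sublocale reindexed: surj_reindexing C sem_obj "BiMag (Obj C)"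
  by unfold_locales (rule sem_obj_surj)

abbreviation Ct :: "('o bimag, 'o bimag \<times> 'o bimag \<times> 'm) cat" where
  "Ct \<equiv> inv_image_cat C sem_obj (BiMag (Obj C))"

text \<open>\<open>iota\<close> interprets an arbitrary representative of a \<^const>\<open>teq\<close>-class; by
  \<open>sem_tm_respects_teq\<close> the choice does not matter.\<close>

definition iota :: "'o bimag \<times> 'o bimag \<times> 'o tm set \<Rightarrow> 'o bimag \<times> 'o bimag \<times> 'm" where
  "iota u = (fst u, fst (snd u), sem_tm (SOME t. t \<in> snd (snd u)))"

lemma iota_cls: "typed (Obj C) t A B \<Longrightarrow> iota (A, B, cls (Obj C) t) = (A, B, sem_tm t)"
  unfolding iota_def using sem_tm_respects_teq[OF teq_some_cls] by simp

lemma functor_iota: "functor (CFam (Obj C)) Ct (\<lambda>A. A) iota"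
proof (rule functorI[OF category_CFam reindexed.category_inv_image_cat])
  fix f a b assume "f \<in> hom (CFam (Obj C)) a b"
  then obtain t where "f = (a, b, cls (Obj C) t)" "typed (Obj C) t a b" by (auto simp: hom_CFam)
  then show "iota f \<in> hom Ct a b"
    using iota_cls sem_tm_in_hom typed_BiMag by (simp add: hom_inv_image_cat)
next
  fix f g a b c assume "f \<in> hom (CFam (Obj C)) a b" "g \<in> hom (CFam (Obj C)) b c"
  then obtain t s where "f = (a, b, cls (Obj C) t)" "g = (b, c, cls (Obj C) s)"
    and "typed (Obj C) t a b" "typed (Obj C) s b c" by (auto simp: hom_CFam)
  then show "iota (Cmp (CFam (Obj C)) g f) = Cmp Ct (iota g) (iota f)"
    by (simp add: Cmp_CFam iota_cls typed.t_comp)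
qed (simp_all add: iota_cls typed.t_id)

lemma Ct_terminal: "is_terminal Ct One"
  using reindexed.inv_image_cat_terminal[of One] terminal_one by simp

lemma Ct_product:
  assumes "A \<in> BiMag (Obj C)" "B \<in> BiMag (Obj C)"
  shows "is_product Ct A B (Prod A B) (iota (Prod A B, A, cls (Obj C) (TFst A B)))
           (iota (Prod A B, B, cls (Obj C) (TSnd A B)))"
  using reindexed.inv_image_cat_productI product_prd sem_obj_in_Obj assms
  by (simp add: iota_cls typed.intros)

lemma Ct_exponential:
  assumes "X \<in> BiMag (Obj C)" "Y \<in> BiMag (Obj C)"
  shows "is_exponential Ct X Y (Exp X Y) (Prod (Exp X Y) X)
           (iota (Prod (Exp X Y) X, Exp X Y, cls (Obj C) (TFst (Exp X Y) X)))
           (iota (Prod (Exp X Y) X, X, cls (Obj C) (TSnd (Exp X Y) X)))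
           (iota (Prod (Exp X Y) X, Y, cls (Obj C) (TEv X Y)))"
  using reindexed.inv_image_cat_exponential[of X Y "Exp X Y" "Prod (Exp X Y) X"]
    exponential_expo sem_obj_in_Obj assms
  by (simp add: iota_cls typed.intros)

lemma cartesian_closed_Ct: "cartesian_closed Ct"
  unfolding cartesian_closed_def
proof (intro conjI ballI)
  fix a b assume "a \<in> Obj Ct" "b \<in> Obj Ct"
  then show "\<exists>p p1 p2. is_product Ct a b p p1 p2"
    using Ct_product by (simp only: inv_image_cat_simps) blast
next
  fix x y assume "x \<in> Obj Ct" "y \<in> Obj Ct"
  then show "\<exists>e p p1 p2 ev. is_exponential Ct x y e p p1 p2 ev"
    using Ct_exponential by (simp only: inv_image_cat_simps) blast
qed (use reindexed.category_inv_image_cat Ct_terminal in auto)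

lemma cc_functor_iota: "cc_functor (CFam (Obj C)) Ct (\<lambda>A. A) iota"
proof -
  note F = functor_iota
  have product: "is_product Ct a b p (iota p1) (iota p2)"
    if P: "is_product (CFam (Obj C)) a b p p1 p2" for a b p p1 p2
  proof -
    have "p1 \<in> hom (CFam (Obj C)) p a" "p2 \<in> hom (CFam (Obj C)) p b" using is_productD[OF P] by auto
    then have "a \<in> BiMag (Obj C)" "b \<in> BiMag (Obj C)" using CFam.hom_objs by fastforce+
    then show ?thesis using functor_preserves_product[OF F CFam_product _ P] Ct_product by simp
  qed
  have exponential: "is_exponential Ct x y e p (iota p1) (iota p2) (iota ev)"
    if E: "is_exponential (CFam (Obj C)) x y e p p1 p2 ev" for x y e p p1 p2 ev
  proof -
    have P: "is_product (CFam (Obj C)) e x p p1 p2" and ev: "ev \<in> hom (CFam (Obj C)) p y"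
      using is_exponentialD[OF E] by auto
    have "p2 \<in> hom (CFam (Obj C)) p x" using is_productD[OF P] by auto
    then have "x \<in> BiMag (Obj C)" "y \<in> BiMag (Obj C)" using CFam.hom_objs ev by fastforce+
    then show ?thesis
      using functor_preserves_exponential[OF F CFam_exponential _ E] Ct_exponential product[OF P]
      by simp
  qed
  show ?thesis
    unfolding cc_functor_def
  proof (intro conjI allI impI F product exponential)
    fix t assume "is_terminal (CFam (Obj C)) t"
    then show "is_terminal Ct t"
      using functor_preserves_terminal[OF F CFam_terminal] Ct_terminal by simp
  qed
qed

end

theorem mainTheorem8:
  fixes C :: "('o, 'm) cat"
  assumes "cartesian_closed C"
  shows "\<exists>(S :: 'o set) (Ct :: ('o bimag, 'o bimag \<times> 'o bimag \<times> 'm) cat) \<iota>.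
           sorted_ccc S Ct \<iota> \<and> equivalent_cats C Ct"
proof -
  obtain one prd pr1 pr2 expo ev_arr where "chosen_ccc C one prd pr1 pr2 expo ev_arr"
    using cartesian_closed_chosen_ccc[OF assms] by blast
  then interpret chosen_ccc C one prd pr1 pr2 expo ev_arr .
  have "sorted_ccc (Obj C) Ct iota"
    unfolding sorted_ccc_def using cartesian_closed_Ct cc_functor_iota by simp
  then show ?thesis using reindexed.equivalent_inv_image_cat by blast
qed

end
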